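(* Let $d\in\mathbb{N}_{+}$, $\omega\in\mathbb{R}^d$, $\rho>0$, $m>d+5$, $\beta>0$ with $1/\sqrt\beta\notin\mathbb{Z}$, and $f\in\mathcal{H}^{\rho,m}(\mathbb{T}^{d+1})$. Let $\Omega=\Omega(\sigma,\mu)$ with $\mu$ sufficiently large and $\sigma$ sufficiently small. For $\varepsilon\in\Omega$ let $\mathcal{N}_\varepsilon=\varepsilon(\omega\cdot\partial_\theta)^2+(\omega\cdot\partial_\theta)-\varepsilon\beta\partial_x^4-\varepsilon\partial_x^2$ and $\mathcal{T}_\varepsilon(U)=\varepsilon\mathcal{N}_\varepsilon^{-1}[(U^2)_{xx}+f]$. Then $\mathcal{T}$, defined by $\mathcal{T}(U)_\varepsilon=\mathcal{T}_\varepsilon(U_\varepsilon)$, maps $\mathcal{H}^{\rho,m,\Omega}$ into itself. Precisely, if $\varepsilon\mapsto U_\varepsilon$, $\Omega\to\mathcal{H}^{\rho,m}$, is complex differentiable, then $\varepsilon\mapsto\mathcal{T}_\varepsilon(U_\varepsilon)$, $\Omega\to\mathcal{H}^{\rho,m}$, is also complex differentiable.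
   Context: $\Omega(\sigma,\mu)=\{\varepsilon\in\mathbb{C}:\ \mathrm{Re}\,\varepsilon\ge\mu|\mathrm{Im}\,\varepsilon|,\ \sigma\le|\varepsilon|\le2\sigma\}$. $\mathcal{H}^{\rho,m}$ is the space of analytic $U(\theta,x)=\sum_{k\in\mathbb{Z}^d,j\in\mathbb{Z}}\widehat U_{k,j}e^{\mathrm{i}(k\cdot\theta+jx)}$ on the complex strip of width $\rho$ around $\mathbb{T}^{d+1}$, with $\int_0^{2\pi}U\,dx=0$ (so $\widehat U_{k,0}=0$) and $\|U\|_{\rho,m}^2=\sum|\widehat U_{k,j}|^2e^{2\rho(|k|+|j|)}(|k|^2+|j|^2+1)^m<\infty$. $\mathcal{N}_\varepsilon$ is the Fourier multiplier with symbol $-\varepsilon(k\cdot\omega)^2+\mathrm{i}(k\cdot\omega)-\varepsilon(\beta j^4-j^2)$. $\mathcal{H}^{\rho,m,\Omega}$ is the Banach space of bounded analytic maps $\Omega\to\mathcal{H}^{\rho,m}$ with the supremum norm. *)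

theory Defs
  imports "HOL-Analysis.Analysis"
begin

text \<open>Fourier index (k,j) with k in Z^d (d = CARD('d)) and j in Z.
  An element U of H^{rho,m} is represented by its Fourier coefficients.\<close>

type_synonym 'd fidx = "(int ^ 'd) \<times> int"
type_synonym 'd coeffs = "'d fidx \<Rightarrow> complex"

definition l1norm :: "int ^ ('d::finite) \<Rightarrow> real" where
  "l1norm k = (\<Sum>i\<in>UNIV. \<bar>real_of_int (k $ i)\<bar>)"

definition sqnorm :: "int ^ ('d::finite) \<Rightarrow> real" where
  "sqnorm k = (\<Sum>i\<in>UNIV. (real_of_int (k $ i))\<^sup>2)"

definition kdot :: "int ^ ('d::finite) \<Rightarrow> real ^ 'd \<Rightarrow> real" where
  "kdot k \<omega> = (\<Sum>i\<in>UNIV. real_of_int (k $ i) * \<omega> $ i)"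

definition weight :: "real \<Rightarrow> real \<Rightarrow> 'd::finite fidx \<Rightarrow> real" where
  "weight \<rho> m q = exp (2 * \<rho> * (l1norm (fst q) + \<bar>real_of_int (snd q)\<bar>))
                    * (sqnorm (fst q) + (real_of_int (snd q))\<^sup>2 + 1) powr m"

definition Hnormsq :: "real \<Rightarrow> real \<Rightarrow> ('d::finite) coeffs \<Rightarrow> real" where
  "Hnormsq \<rho> m U = (\<Sum>\<^sub>\<infinity>q. (cmod (U q))\<^sup>2 * weight \<rho> m q)"

definition Hnorm :: "real \<Rightarrow> real \<Rightarrow> ('d::finite) coeffs \<Rightarrow> real" where
  "Hnorm \<rho> m U = sqrt (Hnormsq \<rho> m U)"

text \<open>The space H^{rho,m}: zero x-average and finite norm.\<close>
definition Hspace :: "real \<Rightarrow> real \<Rightarrow> ('d::finite) coeffs set" where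
  "Hspace \<rho> m = {U. (\<forall>k. U (k, 0) = 0) \<and>
                    (\<lambda>q. (cmod (U q))\<^sup>2 * weight \<rho> m q) summable_on UNIV}"

definition Omega :: "real \<Rightarrow> real \<Rightarrow> complex set" where
  "Omega \<sigma> \<mu> = {e. Re e \<ge> \<mu> * \<bar>Im e\<bar> \<and> \<sigma> \<le> cmod e \<and> cmod e \<le> 2 * \<sigma>}"

definition Hdiff_within ::
  "real \<Rightarrow> real \<Rightarrow> (complex \<Rightarrow> ('d::finite) coeffs) \<Rightarrow> complex \<Rightarrow> complex set \<Rightarrow> bool" where
  "Hdiff_within \<rho> m U e S \<longleftrightarrow>
     (\<exists>D \<in> Hspace \<rho> m.
        ((\<lambda>h. Hnorm \<rho> m (\<lambda>q. (U (e + h) q - U e q) / h - D q)) \<longlongrightarrow> 0)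
          (at 0 within {h. e + h \<in> S}))"

definition HOmega :: "real \<Rightarrow> real \<Rightarrow> complex set \<Rightarrow> (complex \<Rightarrow> ('d::finite) coeffs) set" where
  "HOmega \<rho> m S = {U. (\<forall>e\<in>S. U e \<in> Hspace \<rho> m) \<and>
                      (\<exists>B. \<forall>e\<in>S. Hnorm \<rho> m (U e) \<le> B) \<and>
                      (\<forall>e\<in>S. Hdiff_within \<rho> m U e S)}"

text \<open>Product of functions = convolution of Fourier coefficients.\<close>
definition conv :: "('d::finite) coeffs \<Rightarrow> 'd coeffs \<Rightarrow> 'd coeffs" where
  "conv U V q = (\<Sum>\<^sub>\<infinity>p. U p * V (fst q - fst p, snd q - snd p))"

definition Nsym :: "real ^ ('d::finite) \<Rightarrow> real \<Rightarrow> complex \<Rightarrow> 'd fidx \<Rightarrow> complex" where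
  "Nsym \<omega> \<beta> e q = - e * (complex_of_real (kdot (fst q) \<omega>))\<^sup>2
                    + \<i> * complex_of_real (kdot (fst q) \<omega>)
                    - e * complex_of_real (\<beta> * (real_of_int (snd q))^4 - (real_of_int (snd q))\<^sup>2)"

text \<open>T_eps(U) = eps N_eps^{-1}[(U^2)_xx + f]; (U^2)_xx has coefficients -j^2 (U*U)_{k,j}.\<close>
definition Tmap :: "real ^ ('d::finite) \<Rightarrow> real \<Rightarrow> 'd coeffs \<Rightarrow> complex \<Rightarrow> 'd coeffs \<Rightarrow> 'd coeffs" where
  "Tmap \<omega> \<beta> f e U q =
     e * ((- (of_int (snd q))\<^sup>2) * conv U U q + f q) / Nsym \<omega> \<beta> e q"

end

theory Submission
  imports Defs
begin

text \<open>The coefficients of \<open>(U\<^sup>2)\<^sub>x\<^sub>x + f\<close> are \<open>-j\<^sup>2 (U * U) + f\<close>, with \<open>*\<close> the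
  convolution of Fourier coefficients, and the claim rests on three facts.
  (1) For \<open>m \<ge> d + 1\<close> the weighted space is an algebra for \<open>*\<close>: after splitting the weight,
  every term of the convolution carries its polynomial part on one factor only, and the weighted
  \<open>\<ell>\<^sup>1\<close> norm of the other factor is bounded by its \<open>\<ell>\<^sup>2\<close> norm through Cauchy-Schwarz against
  the summable lattice sum of \<open>(1 + |q|\<^sup>2)\<^sup>-\<^sup>m\<close>.
  (2) On \<open>\<Omega>(\<sigma>, \<mu>)\<close> with \<open>\<mu> \<ge> 1\<close> and \<open>\<sigma>\<close> small, non-resonance \<open>1/\<surd>\<beta> \<notin> \<int>\<close> gives
  \<open>|N\<^sub>\<epsilon>(k, j)| \<ge> c (1 + j\<^sup>2)\<close> on all modes \<open>j \<noteq> 0\<close>; hence \<open>\<epsilon> N\<^sub>\<epsilon>\<^sup>-\<^sup>1\<close> absorbs the two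
  \<open>x\<close>-derivatives, and \<open>\<epsilon> \<mapsto> \<epsilon> N\<^sub>\<epsilon>\<^sup>-\<^sup>1\<close> is differentiable with a remainder of order
  \<open>|\<epsilon>' - \<epsilon>|\<close> uniformly in the mode.
  (3) Product rules for the convolution and for such multipliers give the differentiability of
  \<open>\<epsilon> \<mapsto> T\<^sub>\<epsilon>(U\<^sub>\<epsilon>)\<close>; the modes \<open>j = 0\<close> vanish because \<open>\<partial>\<^sub>x\<^sup>2\<close> kills them and \<open>f\<close> has
  zero \<open>x\<close>-average.\<close>

section \<open>Square-summable real families\<close>

definition l2_summable :: "('a \<Rightarrow> real) \<Rightarrow> bool" where
  "l2_summable g \<longleftrightarrow> (\<lambda>x. (g x)\<^sup>2) summable_on UNIV"

definition l2_norm :: "('a \<Rightarrow> real) \<Rightarrow> real" where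
  "l2_norm g = sqrt (\<Sum>\<^sub>\<infinity>x. (g x)\<^sup>2)"

lemma l2_norm_nonneg: "l2_norm g \<ge> 0"
  unfolding l2_norm_def by (simp add: infsum_nonneg)

lemma l2_norm_square: "(l2_norm g)\<^sup>2 = (\<Sum>\<^sub>\<infinity>x. (g x)\<^sup>2)"
  unfolding l2_norm_def by (simp add: infsum_nonneg)

lemma l2_summable_if_finite_sums_le:
  assumes "B \<ge> 0" and "\<And>F. finite F \<Longrightarrow> (\<Sum>x\<in>F. (g x)\<^sup>2) \<le> B\<^sup>2"
  shows "l2_summable g" and "l2_norm g \<le> B"
proof -
  show summable: "l2_summable g"
    unfolding l2_summable_def
    by (rule nonneg_bdd_above_summable_on) (use assms(2) in \<open>auto simp: bdd_above_def\<close>)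
  have "(\<Sum>\<^sub>\<infinity>x. (g x)\<^sup>2) \<le> B\<^sup>2"
    by (rule infsum_le_finite_sums) (use summable assms(2) in \<open>auto simp: l2_summable_def\<close>)
  then show "l2_norm g \<le> B"
    unfolding l2_norm_def using assms(1) real_sqrt_le_mono by fastforce
qed

lemma finite_sum_square_le_l2_norm:
  assumes "l2_summable g" and "finite F"
  shows "(\<Sum>x\<in>F. (g x)\<^sup>2) \<le> (l2_norm g)\<^sup>2"
  unfolding l2_norm_square
  by (rule finite_sum_le_infsum) (use assms in \<open>auto simp: l2_summable_def\<close>)

lemma L2_set_le_l2_norm:
  assumes "l2_summable g" and "finite F"
  shows "L2_set g F \<le> l2_norm g"
  using real_sqrt_le_mono[OF finite_sum_square_le_l2_norm[OF assms]] l2_norm_nonneg[of g]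
  by (simp add: L2_set_def)

lemma abs_le_l2_norm:
  assumes "l2_summable g"
  shows "\<bar>g x\<bar> \<le> l2_norm g"
  using L2_set_le_l2_norm[OF assms, of "{x}"] by simp

lemma l2_summable_mono:
  assumes "l2_summable g'" and "\<And>x. \<bar>g x\<bar> \<le> g' x"
  shows "l2_summable g" and "l2_norm g \<le> l2_norm g'"
proof -
  have finite_sums: "(\<Sum>x\<in>F. (g x)\<^sup>2) \<le> (l2_norm g')\<^sup>2" if "finite F" for F
  proof -
    have "(\<Sum>x\<in>F. (g x)\<^sup>2) \<le> (\<Sum>x\<in>F. (g' x)\<^sup>2)"
      using power_mono[OF assms(2) abs_ge_zero, of _ 2] by (intro sum_mono) simp
    also have "\<dots> \<le> (l2_norm g')\<^sup>2"
      by (rule finite_sum_square_le_l2_norm[OF assms(1) that])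
    finally show ?thesis .
  qed
  show "l2_summable g" and "l2_norm g \<le> l2_norm g'"
    using l2_summable_if_finite_sums_le[OF l2_norm_nonneg finite_sums] by simp_all
qed

lemma l2_norm_triangle:
  assumes "l2_summable g1" and "l2_summable g2"
  shows "l2_summable (\<lambda>x. g1 x + g2 x)" and "l2_norm (\<lambda>x. g1 x + g2 x) \<le> l2_norm g1 + l2_norm g2"
proof -
  have finite_sums: "(\<Sum>x\<in>F. (g1 x + g2 x)\<^sup>2) \<le> (l2_norm g1 + l2_norm g2)\<^sup>2"
    if F: "finite F" for F
  proof -
    have "L2_set (\<lambda>x. g1 x + g2 x) F \<le> l2_norm g1 + l2_norm g2"
      using L2_set_triangle_ineq[of g1 g2 F] L2_set_le_l2_norm[OF assms(1) F]
        L2_set_le_l2_norm[OF assms(2) F] by linarith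
    then have "(L2_set (\<lambda>x. g1 x + g2 x) F)\<^sup>2 \<le> (l2_norm g1 + l2_norm g2)\<^sup>2"
      by (rule power_mono) (rule L2_set_nonneg)
    then show ?thesis
      by (simp add: L2_set_def sum_nonneg)
  qed
  have "0 \<le> l2_norm g1 + l2_norm g2"
    using l2_norm_nonneg[of g1] l2_norm_nonneg[of g2] by simp
  then show "l2_summable (\<lambda>x. g1 x + g2 x)"
    and "l2_norm (\<lambda>x. g1 x + g2 x) \<le> l2_norm g1 + l2_norm g2"
    using l2_summable_if_finite_sums_le[OF _ finite_sums] by simp_all
qed

lemma l2_summable_scale:
  assumes "l2_summable g"
  shows "l2_summable (\<lambda>x. c * g x)" and "l2_norm (\<lambda>x. c * g x) = \<bar>c\<bar> * l2_norm g"
proof -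
  have squares: "(\<lambda>x. (c * g x)\<^sup>2) = (\<lambda>x. c\<^sup>2 * (g x)\<^sup>2)"
    by (simp add: power_mult_distrib)
  have summable: "(\<lambda>x. (g x)\<^sup>2) summable_on UNIV"
    using assms by (simp add: l2_summable_def)
  show "l2_summable (\<lambda>x. c * g x)"
    unfolding l2_summable_def squares by (rule summable_on_cmult_right[OF summable])
  show "l2_norm (\<lambda>x. c * g x) = \<bar>c\<bar> * l2_norm g"
    unfolding l2_norm_def squares infsum_cmult_right[OF summable] by (simp add: real_sqrt_mult)
qed

lemma l2_Cauchy_Schwarz:
  assumes "l2_summable a" and "l2_summable b"
  shows "(\<lambda>x. \<bar>a x * b x\<bar>) summable_on UNIV" and "(\<Sum>\<^sub>\<infinity>x. \<bar>a x * b x\<bar>) \<le> l2_norm a * l2_norm b"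
proof -
  have finite_sums: "(\<Sum>x\<in>F. \<bar>a x * b x\<bar>) \<le> l2_norm a * l2_norm b" if F: "finite F" for F
  proof -
    have "(\<Sum>x\<in>F. \<bar>a x * b x\<bar>) \<le> L2_set a F * L2_set b F"
      using L2_set_mult_ineq[of a b F] by (simp add: abs_mult)
    also have "\<dots> \<le> l2_norm a * l2_norm b"
      using L2_set_le_l2_norm[OF assms(1) F] L2_set_le_l2_norm[OF assms(2) F]
      by (intro mult_mono) (auto simp: L2_set_nonneg l2_norm_nonneg)
    finally show ?thesis .
  qed
  show summable: "(\<lambda>x. \<bar>a x * b x\<bar>) summable_on UNIV"
    by (rule nonneg_bdd_above_summable_on) (use finite_sums in \<open>auto simp: bdd_above_def\<close>)
  show "(\<Sum>\<^sub>\<infinity>x. \<bar>a x * b x\<bar>) \<le> l2_norm a * l2_norm b"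
    by (rule infsum_le_finite_sums[OF summable]) (use finite_sums in auto)
qed

lemma summable_on_sum:
  fixes f :: "'i \<Rightarrow> 'a \<Rightarrow> 'b::topological_comm_monoid_add"
  assumes "finite I" and "\<And>i. i \<in> I \<Longrightarrow> f i summable_on A"
  shows "(\<lambda>x. \<Sum>i\<in>I. f i x) summable_on A"
  using assms by (induction I rule: finite_induct) (auto intro: summable_on_add)

lemma infsum_sum:
  fixes f :: "'i \<Rightarrow> 'a \<Rightarrow> 'b::{topological_comm_monoid_add, t2_space}"
  assumes "finite I" and "\<And>i. i \<in> I \<Longrightarrow> f i summable_on A"
  shows "(\<Sum>\<^sub>\<infinity>x\<in>A. \<Sum>i\<in>I. f i x) = (\<Sum>i\<in>I. \<Sum>\<^sub>\<infinity>x\<in>A. f i x)"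
  using assms
  by (induction I rule: finite_induct) (simp_all add: infsum_add summable_on_sum)

lemma bij_reflect_shift: "bij (\<lambda>p::'a::ab_group_add. q - p)"
  by (rule o_bij[where g = "\<lambda>p. q - p"]) (auto simp: fun_eq_iff)

lemma summable_on_reflect_shift:
  "(\<lambda>p::'a::ab_group_add. g (q - p)) summable_on UNIV \<longleftrightarrow> g summable_on UNIV"
  by (rule summable_on_reindex_bij_betw[OF bij_reflect_shift])

lemma infsum_reflect_shift: "(\<Sum>\<^sub>\<infinity>p::'a::ab_group_add. g (q - p)) = (\<Sum>\<^sub>\<infinity>p. g p)"
  by (rule infsum_reindex_bij_betw[OF bij_reflect_shift])

text \<open>Cauchy-Schwarz for the splitting \<open>A p B (q - p) = (A p \<surd>B (q - p)) \<surd>B (q - p)\<close>.\<close>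
lemma convolution_square_le:
  fixes A B :: "'a::ab_group_add \<Rightarrow> real"
  assumes A_nonneg: "\<And>p. A p \<ge> 0" and B_nonneg: "\<And>p. B p \<ge> 0"
    and A2B: "(\<lambda>p. (A p)\<^sup>2 * B (q - p)) summable_on UNIV" and B: "B summable_on UNIV"
  shows "(\<lambda>p. A p * B (q - p)) summable_on UNIV"
    and "(\<Sum>\<^sub>\<infinity>p. A p * B (q - p))\<^sup>2 \<le> (\<Sum>\<^sub>\<infinity>p. B p) * (\<Sum>\<^sub>\<infinity>p. (A p)\<^sup>2 * B (q - p))"
proof -
  define a where "a p = A p * sqrt (B (q - p))" for p
  define b where "b p = sqrt (B (q - p))" for p
  have a2: "(a p)\<^sup>2 = (A p)\<^sup>2 * B (q - p)" and b2: "(b p)\<^sup>2 = B (q - p)" for p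
    unfolding a_def b_def using B_nonneg[of "q - p"] by (simp_all add: power_mult_distrib)
  have "l2_summable a" "l2_summable b"
    unfolding l2_summable_def a2 b2 using A2B B by (simp_all add: summable_on_reflect_shift)
  moreover have "\<bar>a p * b p\<bar> = A p * B (q - p)" for p
    unfolding a_def b_def using A_nonneg[of p] B_nonneg[of "q - p"] by (simp add: abs_mult mult.assoc)
  ultimately have summable: "(\<lambda>p. A p * B (q - p)) summable_on UNIV"
    and le: "(\<Sum>\<^sub>\<infinity>p. A p * B (q - p)) \<le> l2_norm a * l2_norm b"
    using l2_Cauchy_Schwarz[of a b] by simp_all
  show "(\<lambda>p. A p * B (q - p)) summable_on UNIV"
    by (fact summable)
  have "(\<Sum>\<^sub>\<infinity>p. A p * B (q - p))\<^sup>2 \<le> (l2_norm a * l2_norm b)\<^sup>2"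
    using le by (intro power_mono) (auto intro: infsum_nonneg simp: A_nonneg B_nonneg)
  also have "\<dots> = (\<Sum>\<^sub>\<infinity>p. B p) * (\<Sum>\<^sub>\<infinity>p. (A p)\<^sup>2 * B (q - p))"
    by (simp add: power_mult_distrib l2_norm_square a2 b2 infsum_reflect_shift)
  finally show "(\<Sum>\<^sub>\<infinity>p. A p * B (q - p))\<^sup>2 \<le> (\<Sum>\<^sub>\<infinity>p. B p) * (\<Sum>\<^sub>\<infinity>p. (A p)\<^sup>2 * B (q - p))" .
qed

lemma young_inequality:
  fixes A B :: "'a::ab_group_add \<Rightarrow> real"
  assumes A_nonneg: "\<And>p. A p \<ge> 0" and B_nonneg: "\<And>p. B p \<ge> 0"
    and A: "l2_summable A" and B: "B summable_on UNIV"
  shows "(\<lambda>p. A p * B (q - p)) summable_on UNIV"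
    and "l2_summable (\<lambda>q. \<Sum>\<^sub>\<infinity>p. A p * B (q - p))"
    and "l2_norm (\<lambda>q. \<Sum>\<^sub>\<infinity>p. A p * B (q - p)) \<le> l2_norm A * (\<Sum>\<^sub>\<infinity>p. B p)"
proof -
  define S where "S = (\<Sum>\<^sub>\<infinity>p. B p)"
  have S_nonneg: "S \<ge> 0"
    unfolding S_def by (simp add: infsum_nonneg B_nonneg)
  have A2B: "(\<lambda>p. (A p)\<^sup>2 * B (q - p)) summable_on UNIV" for q
  proof (rule summable_on_comparison_test)
    show "(\<lambda>p. (l2_norm A)\<^sup>2 * B (q - p)) summable_on UNIV"
      using B by (simp add: summable_on_cmult_right summable_on_reflect_shift)
    show "(A p)\<^sup>2 * B (q - p) \<le> (l2_norm A)\<^sup>2 * B (q - p)" for p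
      using abs_le_l2_norm[OF A, of p] A_nonneg[of p] B_nonneg[of "q - p"]
      by (auto intro!: mult_right_mono power_mono)
    show "0 \<le> (A p)\<^sup>2 * B (q - p)" for p
      using B_nonneg[of "q - p"] by simp
  qed
  note pointwise = convolution_square_le[OF A_nonneg B_nonneg A2B B, folded S_def]
  show "(\<lambda>p. A p * B (q - p)) summable_on UNIV"
    by (fact pointwise(1))
  have finite_sums: "(\<Sum>q\<in>F. (\<Sum>\<^sub>\<infinity>p. A p * B (q - p))\<^sup>2) \<le> (l2_norm A * S)\<^sup>2"
    if F: "finite F" for F
  proof -
    have "(\<Sum>q\<in>F. (\<Sum>\<^sub>\<infinity>p. A p * B (q - p))\<^sup>2) \<le> (\<Sum>q\<in>F. S * (\<Sum>\<^sub>\<infinity>p. (A p)\<^sup>2 * B (q - p)))"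
      by (intro sum_mono pointwise(2))
    also have "\<dots> = S * (\<Sum>\<^sub>\<infinity>p. (A p)\<^sup>2 * (\<Sum>q\<in>F. B (q - p)))"
      by (simp add: infsum_sum[OF F A2B] sum_distrib_left)
    also have "\<dots> \<le> S * (\<Sum>\<^sub>\<infinity>p. (A p)\<^sup>2 * S)"
    proof (rule mult_left_mono[OF infsum_mono S_nonneg])
      show "(\<lambda>p. (A p)\<^sup>2 * (\<Sum>q\<in>F. B (q - p))) summable_on UNIV"
        using summable_on_sum[OF F A2B] by (simp add: sum_distrib_left)
      show "(\<lambda>p. (A p)\<^sup>2 * S) summable_on UNIV"
        using A by (simp add: l2_summable_def summable_on_cmult_left)
      show "(A p)\<^sup>2 * (\<Sum>q\<in>F. B (q - p)) \<le> (A p)\<^sup>2 * S" for p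
      proof -
        have "inj_on (\<lambda>q. q - p) F"
          by (rule inj_onI) simp
        then have "(\<Sum>q\<in>F. B (q - p)) = (\<Sum>r\<in>(\<lambda>q. q - p) ` F. B r)"
          by (simp add: sum.reindex)
        also have "\<dots> \<le> S"
          unfolding S_def by (rule finite_sum_le_infsum[OF B]) (use F B_nonneg in auto)
        finally show ?thesis
          by (simp add: mult_left_mono)
      qed
    qed
    also have "\<dots> = (l2_norm A * S)\<^sup>2"
      by (simp add: infsum_cmult_left' l2_norm_square power_mult_distrib power2_eq_square[of S])
    finally show ?thesis .
  qed
  then show "l2_summable (\<lambda>q. \<Sum>\<^sub>\<infinity>p. A p * B (q - p))"
    and "l2_norm (\<lambda>q. \<Sum>\<^sub>\<infinity>p. A p * B (q - p)) \<le> l2_norm A * (\<Sum>\<^sub>\<infinity>p. B p)"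
    using l2_summable_if_finite_sums_le[OF _ finite_sums] S_nonneg l2_norm_nonneg[of A]
    unfolding S_def by simp_all
qed

section \<open>Lattice sums\<close>

lemma summable_on_prod_PiE_nonneg:
  fixes f :: "'a \<Rightarrow> 'b \<Rightarrow> real"
  assumes A: "finite A" and nonneg: "\<And>x y. f x y \<ge> 0"
    and summable: "\<And>x. x \<in> A \<Longrightarrow> f x summable_on B x"
  shows "(\<lambda>g. \<Prod>x\<in>A. f x (g x)) summable_on PiE A B"
proof (rule nonneg_bdd_above_summable_on)
  show "0 \<le> (\<Prod>x\<in>A. f x (g x))" for g
    by (simp add: prod_nonneg nonneg)
  have "(\<Sum>g\<in>G. \<Prod>x\<in>A. f x (g x)) \<le> (\<Prod>x\<in>A. \<Sum>\<^sub>\<infinity>y\<in>B x. f x y)"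
    if G: "G \<subseteq> PiE A B" "finite G" for G
  proof -
    define C where "C x = (\<lambda>g. g x) ` G" for x
    have C_sub: "C x \<subseteq> B x" if "x \<in> A" for x
      using G(1) that by (auto simp: C_def)
    have "(\<Sum>g\<in>G. \<Prod>x\<in>A. f x (g x)) \<le> (\<Sum>g\<in>PiE A C. \<Prod>x\<in>A. f x (g x))"
    proof (rule sum_mono2)
      show "finite (PiE A C)"
        using A G(2) by (simp add: finite_PiE C_def)
      show "G \<subseteq> PiE A C"
        using G(1) by (auto simp: C_def PiE_iff)
    qed (simp add: prod_nonneg nonneg)
    also have "\<dots> = (\<Prod>x\<in>A. \<Sum>y\<in>C x. f x y)"
      by (rule prod_sum_PiE[symmetric]) (use A G(2) in \<open>auto simp: C_def\<close>)
    also have "\<dots> \<le> (\<Prod>x\<in>A. \<Sum>\<^sub>\<infinity>y\<in>B x. f x y)"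
      using G(2) C_sub
      by (intro prod_mono conjI sum_nonneg finite_sum_le_infsum summable)
        (auto simp: nonneg C_def)
    finally show ?thesis .
  qed
  then show "bdd_above (sum (\<lambda>g. \<Prod>x\<in>A. f x (g x)) ` {G. G \<subseteq> PiE A B \<and> finite G})"
    by (auto simp: bdd_above_def)
qed

lemma summable_on_vec_prod_nonneg:
  fixes h :: "'a \<Rightarrow> real"
  assumes "\<And>n. h n \<ge> 0" and "h summable_on UNIV"
  shows "(\<lambda>k::'a^'d::finite. \<Prod>i\<in>UNIV. h (k $ i)) summable_on UNIV"
proof -
  have "bij (vec_lambda :: ('d \<Rightarrow> 'a) \<Rightarrow> 'a^'d)"
    by (rule o_bij[where g = vec_nth]) (auto simp: fun_eq_iff vec_eq_iff)
  moreover have "(\<lambda>g::'d \<Rightarrow> 'a. \<Prod>i\<in>UNIV. h (g i)) summable_on PiE UNIV (\<lambda>_. UNIV)"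
    using assms by (intro summable_on_prod_PiE_nonneg) auto
  ultimately show ?thesis
    by (simp add: summable_on_reindex_bij_betw[symmetric])
qed

lemma summable_on_times_nonneg:
  fixes a :: "'a \<Rightarrow> real" and b :: "'b \<Rightarrow> real"
  assumes "\<And>x. a x \<ge> 0" and "\<And>y. b y \<ge> 0" and "a summable_on A" and "b summable_on B"
  shows "(\<lambda>(x, y). a x * b y) summable_on A \<times> B"
proof (rule summable_on_SigmaI[where g = "\<lambda>x. a x * (\<Sum>\<^sub>\<infinity>y\<in>B. b y)"])
  show "((\<lambda>y. case (x, y) of (x, y) \<Rightarrow> a x * b y) has_sum a x * (\<Sum>\<^sub>\<infinity>y\<in>B. b y)) B" for x
    using has_sum_cmult_right[OF has_sum_infsum[OF assms(4)]] by simp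
  show "(\<lambda>x. a x * (\<Sum>\<^sub>\<infinity>y\<in>B. b y)) summable_on A"
    by (rule summable_on_cmult_left[OF assms(3)])
qed (simp add: assms)

lemma summable_on_inverse_one_plus_square_int:
  "(\<lambda>n::int. 1 / (1 + (real_of_int n)\<^sup>2)) summable_on UNIV"
proof -
  have "summable (\<lambda>n::nat. 1 / (1 + (real n)\<^sup>2))"
  proof (rule summable_comparison_test')
    have "summable (\<lambda>n::nat. inverse (real (Suc n) ^ 2))"
      by (subst summable_Suc_iff[where f = "\<lambda>n. inverse (real n ^ 2)"])
        (rule inverse_power_summable, simp)
    then show "summable (\<lambda>n::nat. 2 * inverse (real (Suc n) ^ 2))"
      by (rule summable_mult)
    show "norm (1 / (1 + (real n)\<^sup>2)) \<le> 2 * inverse (real (Suc n) ^ 2)" for n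
    proof -
      have "(real (Suc n))\<^sup>2 \<le> 2 * (1 + (real n)\<^sup>2)"
        using zero_le_power2[of "real n - 1"] by (simp add: power2_eq_square algebra_simps)
      then show ?thesis
        by (simp add: field_simps add_pos_nonneg)
    qed
  qed
  then have nat: "(\<lambda>n::nat. 1 / (1 + (real n)\<^sup>2)) summable_on UNIV"
    by (rule summable_nonneg_imp_summable_on) (simp add: add_pos_nonneg)
  have "(\<lambda>n::int. 1 / (1 + (real_of_int n)\<^sup>2)) summable_on range int"
    using nat by (subst summable_on_reindex) (simp_all add: o_def)
  moreover have "(\<lambda>n::int. 1 / (1 + (real_of_int n)\<^sup>2)) summable_on range (\<lambda>n::nat. - int n)"
    using nat by (subst summable_on_reindex) (simp_all add: o_def inj_def)
  moreover have "n \<in> range int \<union> range (\<lambda>n::nat. - int n)" for n :: int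
  proof (cases "n \<ge> 0")
    case True
    then have "n = int (nat n)"
      by simp
    then show ?thesis
      by (metis UnI1 rangeI)
  next
    case False
    then have "n = - int (nat (- n))"
      by simp
    then show ?thesis
      by (metis UnI2 rangeI)
  qed
  ultimately show ?thesis
    using summable_on_union[of _ "range int" "range (\<lambda>n::nat. - int n)"]
    by (metis UNIV_eq_I)
qed

definition bracket_sq :: "'d::finite fidx \<Rightarrow> real" where
  "bracket_sq q = sqnorm (fst q) + (real_of_int (snd q))\<^sup>2 + 1"

lemma sqnorm_nonneg: "sqnorm k \<ge> 0"
  unfolding sqnorm_def by (simp add: sum_nonneg)

lemma bracket_sq_ge_1: "bracket_sq q \<ge> 1"
  unfolding bracket_sq_def using sqnorm_nonneg[of "fst q"] by simp

lemma bracket_sq_powr_le_prod: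
  fixes q :: "'d::finite fidx"
  assumes "m \<ge> real CARD('d) + 1"
  shows "bracket_sq q powr -m
    \<le> (\<Prod>i\<in>UNIV. 1 / (1 + (real_of_int (fst q $ i))\<^sup>2)) * (1 / (1 + (real_of_int (snd q))\<^sup>2))"
proof -
  define P where "P = bracket_sq q"
  have P: "P \<ge> 1"
    unfolding P_def by (rule bracket_sq_ge_1)
  have coord: "1 + (real_of_int (fst q $ i))\<^sup>2 \<le> P" for i
  proof -
    have "(real_of_int (fst q $ i))\<^sup>2 \<le> sqnorm (fst q)"
      unfolding sqnorm_def by (rule member_le_sum) auto
    then show ?thesis
      unfolding P_def bracket_sq_def using zero_le_power2[of "real_of_int (snd q)"] by linarith
  qed
  have "(\<Prod>i\<in>UNIV. 1 + (real_of_int (fst q $ i))\<^sup>2) * (1 + (real_of_int (snd q))\<^sup>2)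
      \<le> P ^ CARD('d) * P"
  proof (rule mult_mono)
    show "(\<Prod>i\<in>UNIV. 1 + (real_of_int (fst q $ i))\<^sup>2) \<le> P ^ CARD('d)"
      using prod_mono[of UNIV "\<lambda>i. 1 + (real_of_int (fst q $ i))\<^sup>2" "\<lambda>_. P"] coord
      by (simp add: add_nonneg_nonneg)
    show "1 + (real_of_int (snd q))\<^sup>2 \<le> P"
      unfolding P_def bracket_sq_def using sqnorm_nonneg[of "fst q"] by simp
  qed (use P in auto)
  moreover have "0 < (\<Prod>i\<in>UNIV. 1 + (real_of_int (fst q $ i))\<^sup>2) * (1 + (real_of_int (snd q))\<^sup>2)"
    by (intro mult_pos_pos prod_pos) (auto simp: add_pos_nonneg)
  ultimately have factors: "1 / (P ^ CARD('d) * P)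
      \<le> 1 / ((\<Prod>i\<in>UNIV. 1 + (real_of_int (fst q $ i))\<^sup>2) * (1 + (real_of_int (snd q))\<^sup>2))"
    by (intro divide_left_mono) (use P in simp_all)
  have "P powr -m \<le> 1 / (P ^ CARD('d) * P)"
  proof -
    have "P powr -m \<le> P powr -(real CARD('d) + 1)"
      using P assms by (intro powr_mono) auto
    also have "\<dots> = 1 / P powr (real CARD('d) + 1)"
      by (rule powr_minus_divide)
    also have "\<dots> = 1 / (P ^ CARD('d) * P)"
      using P by (simp add: powr_add powr_realpow)
    finally show ?thesis .
  qed
  also note factors
  also have "1 / ((\<Prod>i\<in>UNIV. 1 + (real_of_int (fst q $ i))\<^sup>2) * (1 + (real_of_int (snd q))\<^sup>2))
      = (\<Prod>i\<in>UNIV. 1 / (1 + (real_of_int (fst q $ i))\<^sup>2)) * (1 / (1 + (real_of_int (snd q))\<^sup>2))"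
    using prod_dividef[of "\<lambda>_. 1" "\<lambda>i. 1 + (real_of_int (fst q $ i))\<^sup>2" UNIV] by simp
  finally show ?thesis
    unfolding P_def .
qed

lemma bracket_sq_powr_summable:
  assumes "m \<ge> real CARD('d) + 1"
  shows "(\<lambda>q::'d::finite fidx. bracket_sq q powr -m) summable_on UNIV"
proof (rule summable_on_comparison_test)
  define h :: "int \<Rightarrow> real" where "h n = 1 / (1 + (real_of_int n)\<^sup>2)" for n
  have h_nonneg: "h n \<ge> 0" for n
    by (simp add: h_def add_pos_nonneg less_imp_le)
  have h: "h summable_on UNIV"
    unfolding h_def by (rule summable_on_inverse_one_plus_square_int)
  have "(\<lambda>(k, j). (\<Prod>i\<in>UNIV. h (k $ i)) * h j) summable_on (UNIV :: 'd fidx set)"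
    using summable_on_times_nonneg[OF _ h_nonneg summable_on_vec_prod_nonneg[OF h_nonneg h] h]
    by (simp add: prod_nonneg h_nonneg)
  then show "(\<lambda>q::'d fidx. (\<Prod>i\<in>UNIV. h (fst q $ i)) * h (snd q)) summable_on UNIV"
    by (simp add: case_prod_unfold)
  show "bracket_sq q powr -m \<le> (\<Prod>i\<in>UNIV. h (fst q $ i)) * h (snd q)" for q :: "'d fidx"
    unfolding h_def by (rule bracket_sq_powr_le_prod[OF assms])
qed simp

section \<open>The weighted space as a convolution algebra\<close>

definition fidx_l1 :: "'d::finite fidx \<Rightarrow> real" where
  "fidx_l1 q = l1norm (fst q) + \<bar>real_of_int (snd q)\<bar>"

definition exp_weight :: "real \<Rightarrow> 'd::finite fidx \<Rightarrow> real" where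
  "exp_weight \<rho> q = exp (\<rho> * fidx_l1 q)"

definition root_weight :: "real \<Rightarrow> real \<Rightarrow> 'd::finite fidx \<Rightarrow> real" where
  "root_weight \<rho> m q = exp_weight \<rho> q * bracket_sq q powr (m / 2)"

lemma fidx_l1_nonneg: "fidx_l1 q \<ge> 0"
  unfolding fidx_l1_def l1norm_def by (simp add: sum_nonneg)

lemma exp_weight_pos: "exp_weight \<rho> q > 0"
  unfolding exp_weight_def by simp

lemma exp_weight_ge_1: "\<rho> \<ge> 0 \<Longrightarrow> exp_weight \<rho> q \<ge> 1"
  unfolding exp_weight_def using fidx_l1_nonneg[of q] by simp

lemma root_weight_pos: "root_weight \<rho> m q > 0"
  unfolding root_weight_def using exp_weight_pos[of \<rho> q] bracket_sq_ge_1[of q] by simp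

lemma root_weight_ge_1:
  assumes "\<rho> \<ge> 0" and "m \<ge> 0"
  shows "root_weight \<rho> m q \<ge> 1"
proof -
  have "1 \<le> bracket_sq q powr (m / 2)"
    using assms(2) by (intro ge_one_powr_ge_zero bracket_sq_ge_1) simp
  then have "1 * 1 \<le> exp_weight \<rho> q * bracket_sq q powr (m / 2)"
    using exp_weight_ge_1[OF assms(1), of q] by (intro mult_mono) auto
  then show ?thesis
    unfolding root_weight_def by simp
qed

lemma weight_eq_root_weight_sq: "weight \<rho> m q = (root_weight \<rho> m q)\<^sup>2"
proof -
  have "(exp_weight \<rho> q)\<^sup>2 = exp (2 * \<rho> * fidx_l1 q)"
    unfolding exp_weight_def by (simp add: power2_eq_square exp_add[symmetric])
  moreover have "(bracket_sq q powr (m / 2))\<^sup>2 = bracket_sq q powr m"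
    using bracket_sq_ge_1[of q] by (simp add: power2_eq_square powr_add[symmetric])
  ultimately show ?thesis
    by (simp add: weight_def root_weight_def fidx_l1_def bracket_sq_def power_mult_distrib)
qed

lemma fidx_l1_le_diff: "fidx_l1 q \<le> fidx_l1 p + fidx_l1 (q - p)"
proof -
  have "l1norm (fst q) \<le> l1norm (fst p) + l1norm (fst q - fst p)"
    unfolding l1norm_def sum.distrib[symmetric] by (rule sum_mono) auto
  then show ?thesis
    unfolding fidx_l1_def by auto
qed

lemma bracket_sq_le_diff: "bracket_sq q \<le> 2 * bracket_sq p + 2 * bracket_sq (q - p)"
proof -
  have sq: "(x::real)\<^sup>2 \<le> 2 * y\<^sup>2 + 2 * (x - y)\<^sup>2" for x y
    using zero_le_power2[of "x - 2 * y"] by (simp add: power2_eq_square algebra_simps)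
  have "sqnorm (fst q) \<le> 2 * sqnorm (fst p) + 2 * sqnorm (fst q - fst p)"
    unfolding sqnorm_def sum_distrib_left sum.distrib[symmetric] by (rule sum_mono) (use sq in auto)
  then show ?thesis
    unfolding bracket_sq_def using sq[of "real_of_int (snd q)" "real_of_int (snd p)"] by simp
qed

lemma powr_half_le_of_le_sum:
  fixes a b c m :: real
  assumes "m \<ge> 0" and "a \<ge> 1" and "b \<ge> 1" and "c \<ge> 0" and "c \<le> 2 * a + 2 * b"
  shows "c powr (m / 2) \<le> 2 powr m * (a powr (m / 2) + b powr (m / 2))"
proof -
  have "c powr (m / 2) \<le> (4 * max a b) powr (m / 2)"
    using assms by (intro powr_mono2) auto
  also have "\<dots> = 2 powr m * max a b powr (m / 2)"
    using assms(2) by (simp add: powr_mult powr_powr[of 2 2, simplified, symmetric])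
  also have "max a b powr (m / 2) \<le> a powr (m / 2) + b powr (m / 2)"
    by (simp add: max_def)
  finally show ?thesis
    by simp
qed

text \<open>In every term of a convolution one factor carries the polynomial part of the weight
  and the other only its exponential part; this is what makes the weighted space an algebra.\<close>
lemma root_weight_le_diff:
  assumes "m \<ge> 0" and "\<rho> \<ge> 0"
  shows "root_weight \<rho> m q
    \<le> 2 powr m * (root_weight \<rho> m p * exp_weight \<rho> (q - p) + exp_weight \<rho> p * root_weight \<rho> m (q - p))"
proof -
  have "exp_weight \<rho> q \<le> exp_weight \<rho> p * exp_weight \<rho> (q - p)"
    unfolding exp_weight_def exp_add[symmetric] using fidx_l1_le_diff[of q p] assms(2)
    by (simp add: mult_left_mono distrib_left[symmetric])
  moreover have "bracket_sq q powr (m / 2)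
      \<le> 2 powr m * (bracket_sq p powr (m / 2) + bracket_sq (q - p) powr (m / 2))"
    using assms(1) bracket_sq_ge_1[of p] bracket_sq_ge_1[of "q - p"] bracket_sq_ge_1[of q]
      bracket_sq_le_diff[of q p] by (intro powr_half_le_of_le_sum) auto
  ultimately have "root_weight \<rho> m q \<le> (exp_weight \<rho> p * exp_weight \<rho> (q - p))
      * (2 powr m * (bracket_sq p powr (m / 2) + bracket_sq (q - p) powr (m / 2)))"
    unfolding root_weight_def
    by (intro mult_mono) (auto intro: less_imp_le exp_weight_pos mult_nonneg_nonneg)
  then show ?thesis
    unfolding root_weight_def by (simp add: algebra_simps)
qed

definition Hsummable :: "real \<Rightarrow> real \<Rightarrow> 'd::finite coeffs \<Rightarrow> bool" where
  "Hsummable \<rho> m U \<longleftrightarrow> l2_summable (\<lambda>q. cmod (U q) * root_weight \<rho> m q)"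

lemma square_times_weight: "(cmod (U q) * root_weight \<rho> m q)\<^sup>2 = (cmod (U q))\<^sup>2 * weight \<rho> m q"
  by (simp add: weight_eq_root_weight_sq power_mult_distrib)

lemma Hspace_iff: "U \<in> Hspace \<rho> m \<longleftrightarrow> (\<forall>k. U (k, 0) = 0) \<and> Hsummable \<rho> m U"
  unfolding Hspace_def Hsummable_def l2_summable_def square_times_weight by simp

lemma Hnorm_eq_l2_norm: "Hnorm \<rho> m U = l2_norm (\<lambda>q. cmod (U q) * root_weight \<rho> m q)"
  unfolding Hnorm_def Hnormsq_def l2_norm_def square_times_weight ..

lemma Hnorm_nonneg: "Hnorm \<rho> m U \<ge> 0"
  unfolding Hnorm_eq_l2_norm by (rule l2_norm_nonneg)

lemma exp_weighted_l1_le: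
  fixes x :: "'d::finite fidx \<Rightarrow> real"
  assumes m: "m \<ge> real CARD('d) + 1" and x_nonneg: "\<And>p. x p \<ge> 0"
    and x: "l2_summable (\<lambda>p. x p * root_weight \<rho> m p)"
  shows "(\<lambda>p. x p * exp_weight \<rho> p) summable_on UNIV"
    and "(\<Sum>\<^sub>\<infinity>p. x p * exp_weight \<rho> p)
      \<le> l2_norm (\<lambda>p. x p * root_weight \<rho> m p) * sqrt (\<Sum>\<^sub>\<infinity>q::'d fidx. bracket_sq q powr -m)"
proof -
  define b where "b p = bracket_sq p powr (- m / 2)" for p :: "'d fidx"
  have b2: "(b p)\<^sup>2 = bracket_sq p powr -m" for p
    unfolding b_def using bracket_sq_ge_1[of p] by (simp add: power2_eq_square powr_add[symmetric])
  have b: "l2_summable b"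
    unfolding l2_summable_def b2 by (rule bracket_sq_powr_summable[OF m])
  have "\<bar>x p * root_weight \<rho> m p * b p\<bar> = x p * exp_weight \<rho> p" for p
  proof -
    have "bracket_sq p powr (m / 2) * bracket_sq p powr (- m / 2) = 1"
      using bracket_sq_ge_1[of p] by (simp add: powr_add[symmetric])
    then show ?thesis
      unfolding root_weight_def b_def using x_nonneg[of p] exp_weight_pos[of \<rho> p]
      by (simp add: abs_mult mult.assoc)
  qed
  moreover have "l2_norm b = sqrt (\<Sum>\<^sub>\<infinity>q::'d fidx. bracket_sq q powr -m)"
    unfolding l2_norm_def b2 ..
  ultimately show "(\<lambda>p. x p * exp_weight \<rho> p) summable_on UNIV"
    and "(\<Sum>\<^sub>\<infinity>p. x p * exp_weight \<rho> p)
      \<le> l2_norm (\<lambda>p. x p * root_weight \<rho> m p) * sqrt (\<Sum>\<^sub>\<infinity>q::'d fidx. bracket_sq q powr -m)"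
    using l2_Cauchy_Schwarz[OF x b] by simp_all
qed

lemma weighted_conv_le:
  fixes x y :: "'d::finite fidx \<Rightarrow> real"
  assumes m: "m \<ge> 0" and \<rho>: "\<rho> \<ge> 0" and x_nonneg: "\<And>p. x p \<ge> 0" and y_nonneg: "\<And>p. y p \<ge> 0"
    and xy: "(\<lambda>p. x p * y (q - p)) summable_on UNIV"
    and xy1: "(\<lambda>p. x p * root_weight \<rho> m p * (y (q - p) * exp_weight \<rho> (q - p))) summable_on UNIV"
    and xy2: "(\<lambda>p. x p * exp_weight \<rho> p * (y (q - p) * root_weight \<rho> m (q - p))) summable_on UNIV"
  shows "(\<Sum>\<^sub>\<infinity>p. x p * y (q - p)) * root_weight \<rho> m q
    \<le> 2 powr m * ((\<Sum>\<^sub>\<infinity>p. x p * root_weight \<rho> m p * (y (q - p) * exp_weight \<rho> (q - p)))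
      + (\<Sum>\<^sub>\<infinity>p. x p * exp_weight \<rho> p * (y (q - p) * root_weight \<rho> m (q - p))))"
proof -
  have "(\<Sum>\<^sub>\<infinity>p. x p * y (q - p)) * root_weight \<rho> m q = (\<Sum>\<^sub>\<infinity>p. x p * y (q - p) * root_weight \<rho> m q)"
    by (simp add: infsum_cmult_left')
  also have "\<dots> \<le> (\<Sum>\<^sub>\<infinity>p. 2 powr m * (x p * root_weight \<rho> m p * (y (q - p) * exp_weight \<rho> (q - p))
      + x p * exp_weight \<rho> p * (y (q - p) * root_weight \<rho> m (q - p))))"
  proof (rule infsum_mono)
    show "(\<lambda>p. x p * y (q - p) * root_weight \<rho> m q) summable_on UNIV"
      by (rule summable_on_cmult_left[OF xy])
    show "(\<lambda>p. 2 powr m * (x p * root_weight \<rho> m p * (y (q - p) * exp_weight \<rho> (q - p))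
        + x p * exp_weight \<rho> p * (y (q - p) * root_weight \<rho> m (q - p)))) summable_on UNIV"
      by (intro summable_on_cmult_right summable_on_add xy1 xy2)
    have "x p * y (q - p) * root_weight \<rho> m q \<le> x p * y (q - p) * (2 powr m
        * (root_weight \<rho> m p * exp_weight \<rho> (q - p) + exp_weight \<rho> p * root_weight \<rho> m (q - p)))"
      for p using root_weight_le_diff[OF m \<rho>, where q = q and p = p] x_nonneg[of p] y_nonneg[of "q - p"]
      by (intro mult_left_mono) auto
    then show "x p * y (q - p) * root_weight \<rho> m q \<le> 2 powr m * (x p * root_weight \<rho> m p
        * (y (q - p) * exp_weight \<rho> (q - p)) + x p * exp_weight \<rho> p * (y (q - p) * root_weight \<rho> m (q - p)))"
      for p by (simp add: algebra_simps)
  qed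
  also have "\<dots> = 2 powr m * ((\<Sum>\<^sub>\<infinity>p. x p * root_weight \<rho> m p * (y (q - p) * exp_weight \<rho> (q - p)))
      + (\<Sum>\<^sub>\<infinity>p. x p * exp_weight \<rho> p * (y (q - p) * root_weight \<rho> m (q - p))))"
    by (simp add: infsum_cmult_right' infsum_add xy1 xy2)
  finally show ?thesis .
qed

lemma weighted_conv_nonneg:
  fixes x y :: "'d::finite fidx \<Rightarrow> real"
  assumes m: "m \<ge> real CARD('d) + 1" and \<rho>: "\<rho> \<ge> 0"
    and x_nonneg: "\<And>p. x p \<ge> 0" and y_nonneg: "\<And>p. y p \<ge> 0"
    and x: "l2_summable (\<lambda>p. x p * root_weight \<rho> m p)"
    and y: "l2_summable (\<lambda>p. y p * root_weight \<rho> m p)"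
  shows "(\<lambda>p. x p * y (q - p)) summable_on UNIV"
    and "l2_summable (\<lambda>q. (\<Sum>\<^sub>\<infinity>p. x p * y (q - p)) * root_weight \<rho> m q)"
    and "l2_norm (\<lambda>q. (\<Sum>\<^sub>\<infinity>p. x p * y (q - p)) * root_weight \<rho> m q)
      \<le> 2 * 2 powr m * sqrt (\<Sum>\<^sub>\<infinity>q::'d fidx. bracket_sq q powr -m)
        * l2_norm (\<lambda>p. x p * root_weight \<rho> m p) * l2_norm (\<lambda>p. y p * root_weight \<rho> m p)"
proof -
  define S where "S = sqrt (\<Sum>\<^sub>\<infinity>q::'d fidx. bracket_sq q powr -m)"
  define X where "X p = x p * root_weight \<rho> m p" for p
  define Y where "Y p = y p * root_weight \<rho> m p" for p
  define x' where "x' p = x p * exp_weight \<rho> p" for p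
  define y' where "y' p = y p * exp_weight \<rho> p" for p
  have nonneg: "X p \<ge> 0" "Y p \<ge> 0" "x' p \<ge> 0" "y' p \<ge> 0" for p
    unfolding X_def Y_def x'_def y'_def using x_nonneg[of p] y_nonneg[of p]
    by (simp_all add: less_imp_le root_weight_pos exp_weight_pos)
  have X: "l2_summable X" and Y: "l2_summable Y"
    unfolding X_def Y_def by (fact x, fact y)
  have x': "x' summable_on UNIV" "(\<Sum>\<^sub>\<infinity>p. x' p) \<le> l2_norm X * S"
    and y': "y' summable_on UNIV" "(\<Sum>\<^sub>\<infinity>p. y' p) \<le> l2_norm Y * S"
    unfolding x'_def y'_def X_def Y_def S_def
    by (fact exp_weighted_l1_le[OF m x_nonneg x] exp_weighted_l1_le[OF m y_nonneg y])+
  define Z1 where "Z1 q = (\<Sum>\<^sub>\<infinity>p. X p * y' (q - p))" for q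
  define Z2 where "Z2 q = (\<Sum>\<^sub>\<infinity>p. Y p * x' (q - p))" for q
  note young1 = young_inequality[OF nonneg(1) nonneg(4) X y'(1), folded Z1_def]
  note young2 = young_inequality[OF nonneg(2) nonneg(3) Y x'(1), folded Z2_def]
  have Z2_swap: "(\<lambda>p. x' p * Y (q - p)) summable_on UNIV" "(\<Sum>\<^sub>\<infinity>p. x' p * Y (q - p)) = Z2 q" for q
    using summable_on_reflect_shift[of "\<lambda>p. Y p * x' (q - p)" q] young2(1)[of q]
      infsum_reflect_shift[of "\<lambda>p. Y p * x' (q - p)" q]
    by (simp_all add: Z2_def mult.commute)
  have xy_le: "x p * y (q - p) \<le> X p * y' (q - p)" for p q
    unfolding X_def y'_def using x_nonneg[of p] y_nonneg[of "q - p"]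
      root_weight_ge_1[OF \<rho>, of m p] exp_weight_ge_1[OF \<rho>, of "q - p"] m
    by (intro mult_mono) (auto simp: mult_le_cancel_left1)
  show xy: "(\<lambda>p. x p * y (q - p)) summable_on UNIV" for q
    by (rule summable_on_comparison_test[OF young1(1) xy_le]) (simp add: x_nonneg y_nonneg)
  have pointwise: "\<bar>(\<Sum>\<^sub>\<infinity>p. x p * y (q - p)) * root_weight \<rho> m q\<bar> \<le> 2 powr m * (Z1 q + Z2 q)" for q
  proof -
    have X_y': "(\<lambda>p. X p * y' (q - p)) = (\<lambda>p. x p * root_weight \<rho> m p * (y (q - p) * exp_weight \<rho> (q - p)))"
      and x'_Y: "(\<lambda>p. x' p * Y (q - p)) = (\<lambda>p. x p * exp_weight \<rho> p * (y (q - p) * root_weight \<rho> m (q - p)))"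
      by (simp_all add: X_def Y_def x'_def y'_def)
    have "(\<Sum>\<^sub>\<infinity>p. x p * y (q - p)) * root_weight \<rho> m q \<le> 2 powr m * (Z1 q + Z2 q)"
      using weighted_conv_le[OF _ \<rho> x_nonneg y_nonneg xy, where q = q and m = m] young1(1)[of q]
        Z2_swap[of q] m
      unfolding Z1_def X_y' x'_Y by simp
    moreover have "0 \<le> (\<Sum>\<^sub>\<infinity>p. x p * y (q - p))"
      by (rule infsum_nonneg) (simp add: x_nonneg y_nonneg)
    ultimately show ?thesis
      using root_weight_pos[of \<rho> m q] by simp
  qed
  have Z: "l2_summable (\<lambda>q. Z1 q + Z2 q)" "l2_norm (\<lambda>q. Z1 q + Z2 q) \<le> l2_norm Z1 + l2_norm Z2"
    by (fact l2_norm_triangle[OF young1(2) young2(2)])+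
  note scaled = l2_summable_scale[OF Z(1), of "2 powr m"]
  show "l2_summable (\<lambda>q. (\<Sum>\<^sub>\<infinity>p. x p * y (q - p)) * root_weight \<rho> m q)"
    by (rule l2_summable_mono(1)[OF scaled(1) pointwise])
  have "l2_norm (\<lambda>q. (\<Sum>\<^sub>\<infinity>p. x p * y (q - p)) * root_weight \<rho> m q)
      \<le> l2_norm (\<lambda>q. 2 powr m * (Z1 q + Z2 q))"
    by (rule l2_summable_mono(2)[OF scaled(1) pointwise])
  also have "\<dots> = 2 powr m * l2_norm (\<lambda>q. Z1 q + Z2 q)"
    unfolding scaled(2) by simp
  also have "\<dots> \<le> 2 powr m * (l2_norm Z1 + l2_norm Z2)"
    by (rule mult_left_mono[OF Z(2)]) simp
  also have "\<dots> \<le> 2 powr m * (l2_norm X * (l2_norm Y * S) + l2_norm Y * (l2_norm X * S))"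
    using young1(3) young2(3) x'(2) y'(2) l2_norm_nonneg[of X] l2_norm_nonneg[of Y]
    by (intro mult_left_mono add_mono) (auto intro: order_trans mult_left_mono)
  also have "\<dots> = 2 * 2 powr m * S * l2_norm X * l2_norm Y"
    by (simp add: algebra_simps)
  finally show "l2_norm (\<lambda>q. (\<Sum>\<^sub>\<infinity>p. x p * y (q - p)) * root_weight \<rho> m q)
      \<le> 2 * 2 powr m * sqrt (\<Sum>\<^sub>\<infinity>q::'d fidx. bracket_sq q powr -m)
        * l2_norm (\<lambda>p. x p * root_weight \<rho> m p) * l2_norm (\<lambda>p. y p * root_weight \<rho> m p)"
    unfolding S_def X_def Y_def .
qed

lemma conv_eq: "conv U V q = (\<Sum>\<^sub>\<infinity>p. U p * V (q - p))"
  by (simp add: conv_def minus_prod_def)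

lemma Hsummable_conv:
  fixes U V :: "'d::finite coeffs"
  assumes m: "m \<ge> real CARD('d) + 1" and \<rho>: "\<rho> \<ge> 0"
    and U: "Hsummable \<rho> m U" and V: "Hsummable \<rho> m V"
  shows conv_summable: "(\<lambda>p. U p * V (q - p)) summable_on UNIV"
    and "Hsummable \<rho> m (conv U V)"
    and Hnorm_conv_le: "Hnorm \<rho> m (conv U V)
      \<le> 2 * 2 powr m * sqrt (\<Sum>\<^sub>\<infinity>q::'d fidx. bracket_sq q powr -m) * Hnorm \<rho> m U * Hnorm \<rho> m V"
proof -
  note real = weighted_conv_nonneg[OF m \<rho> norm_ge_zero norm_ge_zero U[unfolded Hsummable_def]
      V[unfolded Hsummable_def]]
  have abs_summable: "(\<lambda>p. norm (U p * V (q - p))) summable_on UNIV" for q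
    using real(1) by (simp add: norm_mult)
  show "(\<lambda>p. U p * V (q - p)) summable_on UNIV" for q
    by (rule abs_summable_summable[OF abs_summable])
  have "\<bar>cmod (conv U V q) * root_weight \<rho> m q\<bar>
      \<le> (\<Sum>\<^sub>\<infinity>p. cmod (U p) * cmod (V (q - p))) * root_weight \<rho> m q" for q
  proof -
    have "cmod (conv U V q) \<le> (\<Sum>\<^sub>\<infinity>p. cmod (U p * V (q - p)))"
      unfolding conv_eq by (rule norm_infsum_bound[OF abs_summable])
    then show ?thesis
      using root_weight_pos[of \<rho> m q] by (simp add: norm_mult)
  qed
  note bound = l2_summable_mono[OF real(2) this]
  show "Hsummable \<rho> m (conv U V)"
    unfolding Hsummable_def by (fact bound(1))
  show "Hnorm \<rho> m (conv U V)
      \<le> 2 * 2 powr m * sqrt (\<Sum>\<^sub>\<infinity>q::'d fidx. bracket_sq q powr -m) * Hnorm \<rho> m U * Hnorm \<rho> m V"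
    unfolding Hnorm_eq_l2_norm using bound(2) real(3) by linarith
qed

lemma Hnorm_conv_bound:
  assumes "m \<ge> real CARD('d) + 1" and "\<rho> \<ge> 0"
  obtains K where "K \<ge> 0" and "\<And>U V :: 'd::finite coeffs. Hsummable \<rho> m U \<Longrightarrow> Hsummable \<rho> m V
    \<Longrightarrow> Hnorm \<rho> m (conv U V) \<le> K * Hnorm \<rho> m U * Hnorm \<rho> m V"
proof (rule that)
  show "2 * 2 powr m * sqrt (\<Sum>\<^sub>\<infinity>q::'d fidx. bracket_sq q powr -m) \<ge> 0"
    by (intro mult_nonneg_nonneg real_sqrt_ge_zero infsum_nonneg) auto
qed (rule Hnorm_conv_le[OF assms])

lemma Hsummable_zero [simp]: "Hsummable \<rho> m (\<lambda>_. 0)"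
  by (simp add: Hsummable_def l2_summable_def)

lemma Hnorm_zero [simp]: "Hnorm \<rho> m (\<lambda>_. 0) = 0"
  by (simp add: Hnorm_eq_l2_norm l2_norm_def)

lemma Hnorm_le_lincomb:
  assumes Y: "Hsummable \<rho> m Y" and Z: "Hsummable \<rho> m Z" and "a \<ge> 0" and "b \<ge> 0"
    and X: "\<And>q. cmod (X q) \<le> a * cmod (Y q) + b * cmod (Z q)"
  shows "Hsummable \<rho> m X" and "Hnorm \<rho> m X \<le> a * Hnorm \<rho> m Y + b * Hnorm \<rho> m Z"
proof -
  define wY where "wY q = cmod (Y q) * root_weight \<rho> m q" for q
  define wZ where "wZ q = cmod (Z q) * root_weight \<rho> m q" for q
  note aY = l2_summable_scale[OF Y[unfolded Hsummable_def, folded wY_def], of a]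
  note bZ = l2_summable_scale[OF Z[unfolded Hsummable_def, folded wZ_def], of b]
  note sum = l2_norm_triangle[OF aY(1) bZ(1)]
  have "\<bar>cmod (X q) * root_weight \<rho> m q\<bar> \<le> a * wY q + b * wZ q" for q
    using mult_right_mono[OF X[of q] less_imp_le[OF root_weight_pos]] root_weight_pos[of \<rho> m q]
    by (simp add: wY_def wZ_def algebra_simps)
  note bound = l2_summable_mono[OF sum(1) this]
  show "Hsummable \<rho> m X"
    unfolding Hsummable_def by (fact bound(1))
  show "Hnorm \<rho> m X \<le> a * Hnorm \<rho> m Y + b * Hnorm \<rho> m Z"
    using bound(2) sum(2) aY(2) bZ(2) assms(3,4)
    by (simp add: Hnorm_eq_l2_norm wY_def wZ_def)
qed

lemma Hsummable_add: "Hsummable \<rho> m A \<Longrightarrow> Hsummable \<rho> m B \<Longrightarrow> Hsummable \<rho> m (\<lambda>q. A q + B q)"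
  and Hnorm_add_le: "Hsummable \<rho> m A \<Longrightarrow> Hsummable \<rho> m B
    \<Longrightarrow> Hnorm \<rho> m (\<lambda>q. A q + B q) \<le> Hnorm \<rho> m A + Hnorm \<rho> m B"
  using Hnorm_le_lincomb[of \<rho> m A B 1 1 "\<lambda>q. A q + B q"] by (simp_all add: norm_triangle_ineq)

lemma Hsummable_diff: "Hsummable \<rho> m A \<Longrightarrow> Hsummable \<rho> m B \<Longrightarrow> Hsummable \<rho> m (\<lambda>q. A q - B q)"
  using Hnorm_le_lincomb(1)[of \<rho> m A B 1 1 "\<lambda>q. A q - B q"] by (simp add: norm_triangle_ineq4)

lemma Hsummable_scale: "Hsummable \<rho> m A \<Longrightarrow> Hsummable \<rho> m (\<lambda>q. c * A q)"
  and Hnorm_scale_le: "Hsummable \<rho> m A \<Longrightarrow> Hnorm \<rho> m (\<lambda>q. c * A q) \<le> cmod c * Hnorm \<rho> m A"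
  using Hnorm_le_lincomb[of \<rho> m A A "cmod c" 0 "\<lambda>q. c * A q"] by (simp_all add: norm_mult)

lemma Hsummable_divide: "Hsummable \<rho> m A \<Longrightarrow> Hsummable \<rho> m (\<lambda>q. A q / c)"
  unfolding divide_inverse_commute by (rule Hsummable_scale)

lemma Hsummable_difference_quotient:
  assumes "Hsummable \<rho> m U0" and "Hsummable \<rho> m U1" and "Hsummable \<rho> m D"
  shows "Hsummable \<rho> m (\<lambda>q. (U1 q - U0 q) / h - D q)"
  using assms by (intro Hsummable_diff Hsummable_divide)

lemma zero_in_Hspace: "(\<lambda>_. 0) \<in> Hspace \<rho> m"
  by (simp add: Hspace_iff)

lemma Hspace_add: "A \<in> Hspace \<rho> m \<Longrightarrow> B \<in> Hspace \<rho> m \<Longrightarrow> (\<lambda>q. A q + B q) \<in> Hspace \<rho> m"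
  by (simp add: Hspace_iff Hsummable_add)

section \<open>Differentiability in the weighted norm\<close>

text \<open>Unlike \<^const>\<open>Hdiff_within\<close>, this notion does not require the derivative to have zero
  \<open>x\<close>-average: the square of a curve in \<^const>\<open>Hspace\<close> leaves \<^const>\<open>Hspace\<close>.\<close>
definition has_Hderiv_within ::
  "real \<Rightarrow> real \<Rightarrow> (complex \<Rightarrow> 'd::finite coeffs) \<Rightarrow> 'd coeffs \<Rightarrow> complex \<Rightarrow> complex set \<Rightarrow> bool"
  where "has_Hderiv_within \<rho> m U D e S \<longleftrightarrow> Hsummable \<rho> m D \<and>
    ((\<lambda>h. Hnorm \<rho> m (\<lambda>q. (U (e + h) q - U e q) / h - D q)) \<longlongrightarrow> 0) (at 0 within {h. e + h \<in> S})"

lemma Hdiff_within_iff: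
  "Hdiff_within \<rho> m U e S \<longleftrightarrow> (\<exists>D \<in> Hspace \<rho> m. has_Hderiv_within \<rho> m U D e S)"
  unfolding Hdiff_within_def has_Hderiv_within_def by (auto simp: Hspace_iff)

lemma tendsto_Hnorm_zero_if_le:
  assumes "\<And>h. h \<noteq> 0 \<Longrightarrow> e + h \<in> S \<Longrightarrow> Hnorm \<rho> m (X h) \<le> B h"
    and "(B \<longlongrightarrow> 0) (at 0 within {h. e + h \<in> S})"
  shows "((\<lambda>h. Hnorm \<rho> m (X h)) \<longlongrightarrow> 0) (at 0 within {h. e + h \<in> S})"
proof (rule Lim_null_comparison[OF _ assms(2)])
  show "\<forall>\<^sub>F h in at 0 within {h. e + h \<in> S}. norm (Hnorm \<rho> m (X h)) \<le> B h"
    unfolding eventually_at_filter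
    by (intro always_eventually allI impI) (simp add: Hnorm_nonneg assms(1))
qed

lemma has_Hderiv_withinI:
  assumes "Hsummable \<rho> m D"
    and "\<And>h. h \<noteq> 0 \<Longrightarrow> e + h \<in> S \<Longrightarrow> Hnorm \<rho> m (\<lambda>q. (U (e + h) q - U e q) / h - D q) \<le> B h"
    and "(B \<longlongrightarrow> 0) (at 0 within {h. e + h \<in> S})"
  shows "has_Hderiv_within \<rho> m U D e S"
  unfolding has_Hderiv_within_def
  using assms(1) tendsto_Hnorm_zero_if_le[where X = "\<lambda>h q. (U (e + h) q - U e q) / h - D q", OF assms(2,3)]
  by simp

lemma Hnorm_increment_le:
  assumes "h \<noteq> 0" and "Hsummable \<rho> m U0" and "Hsummable \<rho> m U1" and "Hsummable \<rho> m D"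
  shows "Hnorm \<rho> m (\<lambda>q. U1 q - U0 q)
    \<le> cmod h * (Hnorm \<rho> m (\<lambda>q. (U1 q - U0 q) / h - D q) + Hnorm \<rho> m D)"
proof -
  define E where "E q = (U1 q - U0 q) / h - D q" for q
  have E: "Hsummable \<rho> m E"
    unfolding E_def using assms(2-) by (rule Hsummable_difference_quotient)
  have "(\<lambda>q. U1 q - U0 q) = (\<lambda>q. h * (E q + D q))"
    using assms(1) by (simp add: E_def fun_eq_iff)
  then have "Hnorm \<rho> m (\<lambda>q. U1 q - U0 q) \<le> cmod h * Hnorm \<rho> m (\<lambda>q. E q + D q)"
    using Hnorm_scale_le[OF Hsummable_add[OF E assms(4)]] by simp
  also have "\<dots> \<le> cmod h * (Hnorm \<rho> m E + Hnorm \<rho> m D)"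
    by (rule mult_left_mono[OF Hnorm_add_le[OF E assms(4)]]) simp
  finally show ?thesis
    unfolding E_def .
qed

lemma has_Hderiv_within_increment_tendsto:
  assumes U: "has_Hderiv_within \<rho> m U D e S" and U_summable: "\<And>e'. e' \<in> S \<Longrightarrow> Hsummable \<rho> m (U e')"
    and e: "e \<in> S"
  shows "((\<lambda>h. Hnorm \<rho> m (\<lambda>q. U (e + h) q - U e q)) \<longlongrightarrow> 0) (at 0 within {h. e + h \<in> S})"
proof (rule tendsto_Hnorm_zero_if_le)
  define E where "E h = Hnorm \<rho> m (\<lambda>q. (U (e + h) q - U e q) / h - D q)" for h
  have D: "Hsummable \<rho> m D" and E: "(E \<longlongrightarrow> 0) (at 0 within {h. e + h \<in> S})"
    using U unfolding has_Hderiv_within_def E_def by auto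
  show "Hnorm \<rho> m (\<lambda>q. U (e + h) q - U e q) \<le> cmod h * (E h + Hnorm \<rho> m D)"
    if "h \<noteq> 0" and "e + h \<in> S" for h
    unfolding E_def using that e D U_summable by (intro Hnorm_increment_le) auto
  have "((\<lambda>h. cmod h) \<longlongrightarrow> 0) (at 0 within {h. e + h \<in> S})"
    by (intro tendsto_norm_zero tendsto_ident_at)
  then have "((\<lambda>h. cmod h * (E h + Hnorm \<rho> m D)) \<longlongrightarrow> 0 * (0 + Hnorm \<rho> m D))
      (at 0 within {h. e + h \<in> S})"
    by (intro tendsto_intros E)
  then show "((\<lambda>h. cmod h * (E h + Hnorm \<rho> m D)) \<longlongrightarrow> 0) (at 0 within {h. e + h \<in> S})"
    by simp
qed

lemma has_sum_diff:
  fixes f g :: "'a \<Rightarrow> 'b::topological_ab_group_add"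
  assumes "(f has_sum a) A" and "(g has_sum b) A"
  shows "((\<lambda>x. f x - g x) has_sum (a - b)) A"
proof -
  have "((\<lambda>x. - g x) has_sum - b) A"
    using assms(2) by (simp add: has_sum_uminus)
  then show ?thesis
    using has_sum_add[OF assms(1)] by fastforce
qed

lemma conv_has_sum:
  assumes "m \<ge> real CARD('d) + 1" and "\<rho> \<ge> 0"
    and "Hsummable \<rho> m U" and "Hsummable \<rho> m (V :: 'd::finite coeffs)"
  shows "((\<lambda>p. U p * V (q - p)) has_sum conv U V q) UNIV"
  using conv_summable[OF assms] by (simp add: conv_eq has_sum_infsum)

lemma conv_difference_quotient:
  fixes U0 U1 Ud V0 V1 Vd :: "'d::finite coeffs"
  assumes m: "m \<ge> real CARD('d) + 1" and \<rho>: "\<rho> \<ge> 0" and h: "h \<noteq> 0"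
    and U: "Hsummable \<rho> m U0" "Hsummable \<rho> m U1" "Hsummable \<rho> m Ud"
    and V: "Hsummable \<rho> m V0" "Hsummable \<rho> m V1" "Hsummable \<rho> m Vd"
  shows "(conv U1 V1 q - conv U0 V0 q) / h - (conv Ud V0 q + conv U0 Vd q)
    = conv (\<lambda>p. (U1 p - U0 p) / h - Ud p) V1 q + conv Ud (\<lambda>p. V1 p - V0 p) q
      + conv U0 (\<lambda>p. (V1 p - V0 p) / h - Vd p) q"
proof -
  note has_sum_conv = conv_has_sum[OF m \<rho>]
  have "((\<lambda>p. (U1 p * V1 (q - p) - U0 p * V0 (q - p)) / h - (Ud p * V0 (q - p) + U0 p * Vd (q - p)))
      has_sum (conv U1 V1 q - conv U0 V0 q) / h - (conv Ud V0 q + conv U0 Vd q)) UNIV"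
    by (intro has_sum_diff has_sum_divide_const has_sum_add has_sum_conv U V)
  moreover have "((\<lambda>p. ((U1 p - U0 p) / h - Ud p) * V1 (q - p) + Ud p * (V1 (q - p) - V0 (q - p))
        + U0 p * ((V1 (q - p) - V0 (q - p)) / h - Vd (q - p)))
      has_sum conv (\<lambda>p. (U1 p - U0 p) / h - Ud p) V1 q + conv Ud (\<lambda>p. V1 p - V0 p) q
        + conv U0 (\<lambda>p. (V1 p - V0 p) / h - Vd p) q) UNIV"
    using has_sum_conv[OF Hsummable_difference_quotient[OF U(1,2,3)] V(2)]
      has_sum_conv[OF U(3) Hsummable_diff[OF V(2,1)]]
      has_sum_conv[OF U(1) Hsummable_difference_quotient[OF V(1,2,3)]]
    by (intro has_sum_add) simp_all
  moreover have "(U1 p * V1 (q - p) - U0 p * V0 (q - p)) / h - (Ud p * V0 (q - p) + U0 p * Vd (q - p))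
      = ((U1 p - U0 p) / h - Ud p) * V1 (q - p) + Ud p * (V1 (q - p) - V0 (q - p))
        + U0 p * ((V1 (q - p) - V0 (q - p)) / h - Vd (q - p))" for p
    using h by (simp add: field_simps)
  ultimately show ?thesis
    using has_sum_unique by simp
qed

lemma Hnorm_conv_difference_quotient_le:
  fixes U0 U1 Ud V0 V1 Vd :: "'d::finite coeffs"
  assumes m: "m \<ge> real CARD('d) + 1" and \<rho>: "\<rho> \<ge> 0" and h: "h \<noteq> 0" and K: "K \<ge> 0"
    and conv_le: "\<And>A B :: 'd coeffs. Hsummable \<rho> m A \<Longrightarrow> Hsummable \<rho> m B
      \<Longrightarrow> Hnorm \<rho> m (conv A B) \<le> K * Hnorm \<rho> m A * Hnorm \<rho> m B"
    and U: "Hsummable \<rho> m U0" "Hsummable \<rho> m U1" "Hsummable \<rho> m Ud"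
    and V: "Hsummable \<rho> m V0" "Hsummable \<rho> m V1" "Hsummable \<rho> m Vd"
  shows "Hnorm \<rho> m (\<lambda>q. (conv U1 V1 q - conv U0 V0 q) / h - (conv Ud V0 q + conv U0 Vd q))
    \<le> K * (Hnorm \<rho> m (\<lambda>q. (U1 q - U0 q) / h - Ud q) * (Hnorm \<rho> m V0 + Hnorm \<rho> m (\<lambda>q. V1 q - V0 q))
      + Hnorm \<rho> m Ud * Hnorm \<rho> m (\<lambda>q. V1 q - V0 q)
      + Hnorm \<rho> m U0 * Hnorm \<rho> m (\<lambda>q. (V1 q - V0 q) / h - Vd q))"
proof -
  define EU where "EU = (\<lambda>q. (U1 q - U0 q) / h - Ud q)"
  define EV where "EV = (\<lambda>q. (V1 q - V0 q) / h - Vd q)"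
  define \<Delta>V where "\<Delta>V = (\<lambda>q. V1 q - V0 q)"
  have summable: "Hsummable \<rho> m EU" "Hsummable \<rho> m EV" "Hsummable \<rho> m \<Delta>V"
    unfolding EU_def EV_def \<Delta>V_def using U V by (auto intro: Hsummable_difference_quotient Hsummable_diff)
  have "V1 = (\<lambda>q. V0 q + \<Delta>V q)"
    by (simp add: \<Delta>V_def)
  then have V1_le: "Hnorm \<rho> m V1 \<le> Hnorm \<rho> m V0 + Hnorm \<rho> m \<Delta>V"
    using Hnorm_add_le[OF V(1) summable(3)] by simp
  have remainder: "(\<lambda>q. (conv U1 V1 q - conv U0 V0 q) / h - (conv Ud V0 q + conv U0 Vd q))
      = (\<lambda>q. conv EU V1 q + conv Ud \<Delta>V q + conv U0 EV q)"
    unfolding EU_def EV_def \<Delta>V_def using U V m \<rho> h by (intro ext conv_difference_quotient) auto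
  have conv_summable: "Hsummable \<rho> m (conv EU V1)" "Hsummable \<rho> m (conv Ud \<Delta>V)"
    "Hsummable \<rho> m (conv U0 EV)"
    using summable U V by (simp_all add: Hsummable_conv m \<rho>)
  have "Hnorm \<rho> m (\<lambda>q. conv EU V1 q + conv Ud \<Delta>V q + conv U0 EV q)
      \<le> Hnorm \<rho> m (conv EU V1) + Hnorm \<rho> m (conv Ud \<Delta>V) + Hnorm \<rho> m (conv U0 EV)"
    using Hnorm_add_le[OF Hsummable_add[OF conv_summable(1,2)] conv_summable(3)]
      Hnorm_add_le[OF conv_summable(1,2)] by simp
  also have "\<dots> \<le> K * Hnorm \<rho> m EU * Hnorm \<rho> m V1 + K * Hnorm \<rho> m Ud * Hnorm \<rho> m \<Delta>V
      + K * Hnorm \<rho> m U0 * Hnorm \<rho> m EV"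
    using summable U V by (intro add_mono conv_le)
  also have "\<dots> \<le> K * (Hnorm \<rho> m EU * (Hnorm \<rho> m V0 + Hnorm \<rho> m \<Delta>V) + Hnorm \<rho> m Ud * Hnorm \<rho> m \<Delta>V
      + Hnorm \<rho> m U0 * Hnorm \<rho> m EV)"
    using mult_left_mono[OF mult_left_mono[OF V1_le Hnorm_nonneg] K] by (simp add: algebra_simps)
  finally show ?thesis
    unfolding remainder EU_def EV_def \<Delta>V_def .
qed

lemma has_Hderiv_within_conv:
  fixes U V :: "complex \<Rightarrow> 'd::finite coeffs"
  assumes m: "m \<ge> real CARD('d) + 1" and \<rho>: "\<rho> \<ge> 0"
    and U: "has_Hderiv_within \<rho> m U Ud e S" and U_summable: "\<And>e'. e' \<in> S \<Longrightarrow> Hsummable \<rho> m (U e')"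
    and V: "has_Hderiv_within \<rho> m V Vd e S" and V_summable: "\<And>e'. e' \<in> S \<Longrightarrow> Hsummable \<rho> m (V e')"
    and e: "e \<in> S"
  shows "has_Hderiv_within \<rho> m (\<lambda>e. conv (U e) (V e)) (\<lambda>q. conv Ud (V e) q + conv (U e) Vd q) e S"
proof -
  obtain K where K: "K \<ge> 0"
    and conv_le: "\<And>A B :: 'd coeffs. Hsummable \<rho> m A \<Longrightarrow> Hsummable \<rho> m B
      \<Longrightarrow> Hnorm \<rho> m (conv A B) \<le> K * Hnorm \<rho> m A * Hnorm \<rho> m B"
    using Hnorm_conv_bound[OF m \<rho>] by blast
  have Ud: "Hsummable \<rho> m Ud" and Vd: "Hsummable \<rho> m Vd"
    using U V by (simp_all add: has_Hderiv_within_def)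
  define \<phi>U where "\<phi>U h = Hnorm \<rho> m (\<lambda>q. (U (e + h) q - U e q) / h - Ud q)" for h
  define \<phi>V where "\<phi>V h = Hnorm \<rho> m (\<lambda>q. (V (e + h) q - V e q) / h - Vd q)" for h
  define \<delta>V where "\<delta>V h = Hnorm \<rho> m (\<lambda>q. V (e + h) q - V e q)" for h
  define B where "B h = K * (\<phi>U h * (Hnorm \<rho> m (V e) + \<delta>V h) + Hnorm \<rho> m Ud * \<delta>V h
    + Hnorm \<rho> m (U e) * \<phi>V h)" for h
  show ?thesis
  proof (rule has_Hderiv_withinI)
    show "Hsummable \<rho> m (\<lambda>q. conv Ud (V e) q + conv (U e) Vd q)"
      using U_summable V_summable e Ud Vd by (intro Hsummable_add Hsummable_conv m \<rho>) auto
    show "Hnorm \<rho> m (\<lambda>q. (conv (U (e + h)) (V (e + h)) q - conv (U e) (V e) q) / h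
        - (conv Ud (V e) q + conv (U e) Vd q)) \<le> B h" if "h \<noteq> 0" and "e + h \<in> S" for h
      unfolding B_def \<phi>U_def \<phi>V_def \<delta>V_def
      by (rule Hnorm_conv_difference_quotient_le[OF m \<rho> that(1) K conv_le])
        (use U_summable V_summable e that Ud Vd in auto)
  next
    have "(\<phi>U \<longlongrightarrow> 0) (at 0 within {h. e + h \<in> S})" "(\<phi>V \<longlongrightarrow> 0) (at 0 within {h. e + h \<in> S})"
      using U V unfolding has_Hderiv_within_def \<phi>U_def \<phi>V_def by auto
    moreover have "(\<delta>V \<longlongrightarrow> 0) (at 0 within {h. e + h \<in> S})"
      unfolding \<delta>V_def by (rule has_Hderiv_within_increment_tendsto[OF V V_summable e])
    ultimately have "(B \<longlongrightarrow> K * (0 * (Hnorm \<rho> m (V e) + 0) + Hnorm \<rho> m Ud * 0 + Hnorm \<rho> m (U e) * 0))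
        (at 0 within {h. e + h \<in> S})"
      unfolding B_def by (intro tendsto_intros)
    then show "(B \<longlongrightarrow> 0) (at 0 within {h. e + h \<in> S})"
      by simp
  qed
qed

section \<open>Multipliers gaining two \<open>x\<close>-derivatives\<close>

definition Dxx :: "'d::finite coeffs \<Rightarrow> 'd coeffs" where
  "Dxx W q = - (of_int (snd q))\<^sup>2 * W q"

text \<open>The multiplier compensates the two \<open>x\<close>-derivatives of \<^const>\<open>Dxx\<close>.\<close>
definition smoothing_bound :: "('d::finite fidx \<Rightarrow> complex) \<Rightarrow> real \<Rightarrow> bool" where
  "smoothing_bound M C \<longleftrightarrow> (\<forall>q. snd q \<noteq> 0 \<longrightarrow> cmod (M q) * (1 + (real_of_int (snd q))\<^sup>2) \<le> C)"

lemma Dxx_zero_mode [simp]: "Dxx W (k, 0) = 0"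
  by (simp add: Dxx_def)

lemma smoothing_bound_pointwise:
  assumes M: "smoothing_bound M C" and C: "C \<ge> 0" and f: "\<And>k. f (k, 0) = 0"
  shows "cmod (M q * (Dxx W q + f q)) \<le> C * cmod (W q) + C * cmod (f q)"
proof (cases "snd q = 0")
  case True
  then have "q = (fst q, 0)"
    by (simp add: prod_eq_iff)
  then have "Dxx W q = 0" and "f q = 0"
    using f Dxx_zero_mode by metis+
  then show ?thesis
    using C by simp
next
  case False
  define J where "J = (real_of_int (snd q))\<^sup>2"
  have "cmod (M q) * (1 + J) \<le> C"
    using M False unfolding smoothing_bound_def J_def by blast
  then have "cmod (M q) + cmod (M q) * J \<le> C"
    by (simp add: algebra_simps)
  moreover have "0 \<le> cmod (M q) * J"
    by (simp add: J_def)
  ultimately have MJ: "cmod (M q) * J \<le> C" and M1: "cmod (M q) \<le> C"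
    using norm_ge_zero[of "M q"] by linarith+
  have "cmod (Dxx W q) = J * cmod (W q)"
    unfolding Dxx_def J_def by (simp add: norm_mult norm_power)
  then have "cmod (M q * (Dxx W q + f q)) \<le> cmod (M q) * (J * cmod (W q) + cmod (f q))"
    unfolding norm_mult by (metis mult_left_mono norm_ge_zero norm_triangle_ineq)
  also have "\<dots> = cmod (M q) * J * cmod (W q) + cmod (M q) * cmod (f q)"
    by (simp add: algebra_simps)
  also have "\<dots> \<le> C * cmod (W q) + C * cmod (f q)"
    using MJ M1 by (intro add_mono mult_right_mono norm_ge_zero)
  finally show ?thesis .
qed

lemma Hspace_smoothing_multiplier:
  assumes M: "smoothing_bound M C" and C: "C \<ge> 0" and W: "Hsummable \<rho> m W" and f: "f \<in> Hspace \<rho> m"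
  shows "(\<lambda>q. M q * (Dxx W q + f q)) \<in> Hspace \<rho> m"
    and "Hnorm \<rho> m (\<lambda>q. M q * (Dxx W q + f q)) \<le> C * (Hnorm \<rho> m W + Hnorm \<rho> m f)"
proof -
  have f0: "\<And>k. f (k, 0) = 0" and f_summable: "Hsummable \<rho> m f"
    using f by (simp_all add: Hspace_iff)
  note bound = Hnorm_le_lincomb[where X = "\<lambda>q. M q * (Dxx W q + f q)", OF W f_summable C C
      smoothing_bound_pointwise[where f = f and W = W, OF M C f0]]
  show "(\<lambda>q. M q * (Dxx W q + f q)) \<in> Hspace \<rho> m"
    using bound(1) f0 by (simp add: Hspace_iff)
  show "Hnorm \<rho> m (\<lambda>q. M q * (Dxx W q + f q)) \<le> C * (Hnorm \<rho> m W + Hnorm \<rho> m f)"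
    using bound(2) by (simp add: distrib_left)
qed

lemma Hnorm_multiplier_difference_quotient_le:
  assumes f: "f \<in> Hspace \<rho> m" and h: "h \<noteq> 0"
    and M0: "smoothing_bound M0 C1" and Md: "smoothing_bound Md C2"
    and M_diff: "smoothing_bound (\<lambda>q. (M1 q - M0 q) / h - Md q) (cmod h * C3)"
    and C: "C1 \<ge> 0" "C2 \<ge> 0" "C3 \<ge> 0"
    and W: "Hsummable \<rho> m W0" "Hsummable \<rho> m W1" "Hsummable \<rho> m Wd"
  shows "Hnorm \<rho> m (\<lambda>q. (M1 q * (Dxx W1 q + f q) - M0 q * (Dxx W0 q + f q)) / h
      - (Md q * (Dxx W0 q + f q) + M0 q * Dxx Wd q))
    \<le> cmod h * C3 * (Hnorm \<rho> m W0 + Hnorm \<rho> m (\<lambda>q. W1 q - W0 q) + Hnorm \<rho> m f)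
      + C2 * Hnorm \<rho> m (\<lambda>q. W1 q - W0 q) + C1 * Hnorm \<rho> m (\<lambda>q. (W1 q - W0 q) / h - Wd q)"
proof -
  define R where "R = (\<lambda>q. (M1 q - M0 q) / h - Md q)"
  define \<Delta>W where "\<Delta>W = (\<lambda>q. W1 q - W0 q)"
  define EW where "EW = (\<lambda>q. (W1 q - W0 q) / h - Wd q)"
  have summable: "Hsummable \<rho> m \<Delta>W" "Hsummable \<rho> m EW"
    using W unfolding \<Delta>W_def EW_def by (auto intro: Hsummable_diff Hsummable_difference_quotient)
  note mult0 = Hspace_smoothing_multiplier[where f = "\<lambda>_. 0", OF _ _ _ zero_in_Hspace, simplified]
  note T1 = Hspace_smoothing_multiplier[OF M_diff[folded R_def] _ W(2) f]
    and T2 = mult0[OF Md C(2) summable(1)] and T3 = mult0[OF M0 C(1) summable(2)]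
  have T_summable: "Hsummable \<rho> m (\<lambda>q. R q * (Dxx W1 q + f q))"
    "Hsummable \<rho> m (\<lambda>q. Md q * Dxx \<Delta>W q)" "Hsummable \<rho> m (\<lambda>q. M0 q * Dxx EW q)"
    using T1(1) T2(1) T3(1) C(3) by (simp_all add: Hspace_iff)
  have identity: "(\<lambda>q. (M1 q * (Dxx W1 q + f q) - M0 q * (Dxx W0 q + f q)) / h
      - (Md q * (Dxx W0 q + f q) + M0 q * Dxx Wd q))
      = (\<lambda>q. R q * (Dxx W1 q + f q) + Md q * Dxx \<Delta>W q + M0 q * Dxx EW q)"
    using h by (simp add: fun_eq_iff R_def \<Delta>W_def EW_def Dxx_def field_simps)
  have "Hnorm \<rho> m (\<lambda>q. R q * (Dxx W1 q + f q) + Md q * Dxx \<Delta>W q + M0 q * Dxx EW q)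
      \<le> Hnorm \<rho> m (\<lambda>q. R q * (Dxx W1 q + f q)) + Hnorm \<rho> m (\<lambda>q. Md q * Dxx \<Delta>W q)
        + Hnorm \<rho> m (\<lambda>q. M0 q * Dxx EW q)"
    using Hnorm_add_le[OF Hsummable_add[OF T_summable(1,2)] T_summable(3)]
      Hnorm_add_le[OF T_summable(1,2)] by simp
  also have "\<dots> \<le> cmod h * C3 * (Hnorm \<rho> m W1 + Hnorm \<rho> m f) + C2 * Hnorm \<rho> m \<Delta>W + C1 * Hnorm \<rho> m EW"
    using T1(2) T2(2) T3(2) C(3) by (intro add_mono) simp_all
  also have "\<dots> \<le> cmod h * C3 * (Hnorm \<rho> m W0 + Hnorm \<rho> m \<Delta>W + Hnorm \<rho> m f)
      + C2 * Hnorm \<rho> m \<Delta>W + C1 * Hnorm \<rho> m EW"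
  proof -
    have "W1 = (\<lambda>q. W0 q + \<Delta>W q)"
      by (simp add: \<Delta>W_def)
    then have "Hnorm \<rho> m W1 \<le> Hnorm \<rho> m W0 + Hnorm \<rho> m \<Delta>W"
      using Hnorm_add_le[OF W(1) summable(1)] by simp
    then show ?thesis
      using C(3) by (simp add: mult_left_mono)
  qed
  finally show ?thesis
    unfolding identity \<Delta>W_def EW_def .
qed

lemma Hdiff_within_smoothing_multiplier:
  fixes M :: "complex \<Rightarrow> 'd::finite fidx \<Rightarrow> complex"
  assumes f: "f \<in> Hspace \<rho> m"
    and W: "has_Hderiv_within \<rho> m W Wd e S" and W_summable: "\<And>e'. e' \<in> S \<Longrightarrow> Hsummable \<rho> m (W e')"
    and e: "e \<in> S"
    and M: "smoothing_bound (M e) C1" and Md: "smoothing_bound Md C2"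
    and M_diff: "\<And>e'. e' \<in> S \<Longrightarrow> e' \<noteq> e
      \<Longrightarrow> smoothing_bound (\<lambda>q. (M e' q - M e q) / (e' - e) - Md q) (cmod (e' - e) * C3)"
    and C: "C1 \<ge> 0" "C2 \<ge> 0" "C3 \<ge> 0"
  shows "Hdiff_within \<rho> m (\<lambda>e q. M e q * (Dxx (W e) q + f q)) e S"
proof -
  have Wd: "Hsummable \<rho> m Wd"
    using W by (simp add: has_Hderiv_within_def)
  define D where "D = (\<lambda>q. Md q * (Dxx (W e) q + f q) + M e q * Dxx Wd q)"
  define \<phi> where "\<phi> h = Hnorm \<rho> m (\<lambda>q. (W (e + h) q - W e q) / h - Wd q)" for h
  define \<delta> where "\<delta> h = Hnorm \<rho> m (\<lambda>q. W (e + h) q - W e q)" for h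
  define B where "B h = cmod h * C3 * (Hnorm \<rho> m (W e) + \<delta> h + Hnorm \<rho> m f) + C2 * \<delta> h + C1 * \<phi> h"
    for h
  have D: "D \<in> Hspace \<rho> m"
    unfolding D_def using Hspace_smoothing_multiplier(1)[OF Md C(2) W_summable[OF e] f]
      Hspace_smoothing_multiplier(1)[where f = "\<lambda>_. 0", OF M C(1) Wd zero_in_Hspace]
    by (intro Hspace_add) simp_all
  moreover have "has_Hderiv_within \<rho> m (\<lambda>e q. M e q * (Dxx (W e) q + f q)) D e S"
  proof (rule has_Hderiv_withinI)
    show "Hsummable \<rho> m D"
      using D by (simp add: Hspace_iff)
    show "Hnorm \<rho> m (\<lambda>q. (M (e + h) q * (Dxx (W (e + h)) q + f q) - M e q * (Dxx (W e) q + f q)) / h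
        - D q) \<le> B h" if "h \<noteq> 0" and "e + h \<in> S" for h
      unfolding D_def B_def \<phi>_def \<delta>_def
      using M_diff[OF that(2)] that(1) W_summable[OF e] W_summable[OF that(2)] Wd
      by (intro Hnorm_multiplier_difference_quotient_le[OF f _ M Md _ C]) simp_all
  next
    have "((\<lambda>h. cmod h) \<longlongrightarrow> 0) (at 0 within {h. e + h \<in> S})"
      by (intro tendsto_norm_zero tendsto_ident_at)
    moreover have "(\<phi> \<longlongrightarrow> 0) (at 0 within {h. e + h \<in> S})"
      using W unfolding has_Hderiv_within_def \<phi>_def by auto
    moreover have "(\<delta> \<longlongrightarrow> 0) (at 0 within {h. e + h \<in> S})"
      unfolding \<delta>_def by (rule has_Hderiv_within_increment_tendsto[OF W W_summable e])
    ultimately have "(B \<longlongrightarrow> 0 * C3 * (Hnorm \<rho> m (W e) + 0 + Hnorm \<rho> m f) + C2 * 0 + C1 * 0)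
        (at 0 within {h. e + h \<in> S})"
      unfolding B_def by (intro tendsto_intros)
    then show "(B \<longlongrightarrow> 0) (at 0 within {h. e + h \<in> S})"
      by simp
  qed
  ultimately show ?thesis
    unfolding Hdiff_within_iff by blast
qed

section \<open>The symbol \<open>N\<^sub>\<epsilon>\<close> on \<open>\<Omega>(\<sigma>, \<mu>)\<close>\<close>

text \<open>Non-resonance: the \<open>x\<close>-part \<open>\<beta> j\<^sup>4 - j\<^sup>2 = j\<^sup>2 (\<beta> j\<^sup>2 - 1)\<close> of the symbol
  stays away from zero on the modes \<open>j \<noteq> 0\<close>.\<close>
lemma small_divisor_gap:
  fixes \<beta> :: real
  assumes \<beta>: "\<beta> > 0" and nonresonant: "\<forall>n::int. 1 / sqrt \<beta> \<noteq> of_int n"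
  obtains \<gamma> where "\<gamma> > 0" and "\<forall>j::int. j \<noteq> 0 \<longrightarrow> \<gamma> \<le> \<bar>\<beta> * (real_of_int j)\<^sup>2 - 1\<bar>"
proof -
  define J where "J = {j::int. j \<noteq> 0 \<and> \<beta> * (real_of_int j)\<^sup>2 \<le> 2}"
  have "J \<subseteq> {-\<lceil>2 / \<beta>\<rceil>..\<lceil>2 / \<beta>\<rceil>}"
  proof
    fix j assume "j \<in> J"
    then have j: "1 \<le> \<bar>real_of_int j\<bar>" and small: "\<beta> * (real_of_int j)\<^sup>2 \<le> 2"
      by (auto simp: J_def)
    have "\<bar>real_of_int j\<bar> \<le> (real_of_int j)\<^sup>2"
      using mult_left_mono[OF j abs_ge_zero[of "real_of_int j"]] by (simp add: power2_eq_square)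
    then have "\<beta> * \<bar>real_of_int j\<bar> \<le> \<beta> * (real_of_int j)\<^sup>2"
      using \<beta> by (intro mult_left_mono) auto
    then have "\<beta> * \<bar>real_of_int j\<bar> \<le> 2"
      using small by linarith
    then have "\<bar>real_of_int j\<bar> \<le> 2 / \<beta>"
      using \<beta> by (simp add: field_simps)
    then have "\<bar>j\<bar> \<le> \<lceil>2 / \<beta>\<rceil>"
      by (simp add: le_ceiling_iff)
    then show "j \<in> {-\<lceil>2 / \<beta>\<rceil>..\<lceil>2 / \<beta>\<rceil>}"
      by auto
  qed
  then have J_finite: "finite J"
    by (rule finite_subset) simp
  have nonzero: "\<beta> * (real_of_int j)\<^sup>2 \<noteq> 1" if "j \<noteq> 0" for j :: int
  proof
    assume "\<beta> * (real_of_int j)\<^sup>2 = 1"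
    then have square: "(real_of_int \<bar>j\<bar>)\<^sup>2 = 1 / \<beta>"
      using \<beta> by (simp add: field_simps)
    have "real_of_int \<bar>j\<bar> = 1 / sqrt \<beta>"
      using arg_cong[OF square, of sqrt] by (simp add: real_sqrt_divide)
    then show False
      using nonresonant by (metis of_int_abs)
  qed
  show ?thesis
  proof (rule that)
    have "\<forall>j\<in>J. 0 < \<bar>\<beta> * (real_of_int j)\<^sup>2 - 1\<bar>"
      using nonzero by (simp add: J_def)
    then show "Min (insert 1 ((\<lambda>j. \<bar>\<beta> * (real_of_int j)\<^sup>2 - 1\<bar>) ` J)) > 0"
      using J_finite by (simp add: Min_gr_iff)
    show "\<forall>j. j \<noteq> 0 \<longrightarrow>
        Min (insert 1 ((\<lambda>j. \<bar>\<beta> * (real_of_int j)\<^sup>2 - 1\<bar>) ` J)) \<le> \<bar>\<beta> * (real_of_int j)\<^sup>2 - 1\<bar>"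
    proof (intro allI impI)
      fix j :: int assume "j \<noteq> 0"
      show "Min (insert 1 ((\<lambda>j. \<bar>\<beta> * (real_of_int j)\<^sup>2 - 1\<bar>) ` J)) \<le> \<bar>\<beta> * (real_of_int j)\<^sup>2 - 1\<bar>"
      proof (cases "j \<in> J")
        case False
        then have "1 \<le> \<bar>\<beta> * (real_of_int j)\<^sup>2 - 1\<bar>"
          using \<open>j \<noteq> 0\<close> by (auto simp: J_def)
        moreover have "Min (insert 1 ((\<lambda>j. \<bar>\<beta> * (real_of_int j)\<^sup>2 - 1\<bar>) ` J)) \<le> 1"
          using J_finite by (intro Min_le) auto
        ultimately show ?thesis
          by linarith
      qed (use J_finite in simp)
    qed
  qed
qed

lemma Omega_bounds:
  assumes "\<mu> \<ge> 1" and "e \<in> Omega \<sigma> \<mu>"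
  shows "\<sigma> / 2 \<le> Re e" and "\<bar>Im e\<bar> \<le> 2 * \<sigma>" and "cmod e \<le> 2 * \<sigma>"
proof -
  have Re: "\<mu> * \<bar>Im e\<bar> \<le> Re e" and lower: "\<sigma> \<le> cmod e" and upper: "cmod e \<le> 2 * \<sigma>"
    using assms(2) by (auto simp: Omega_def)
  have "\<bar>Im e\<bar> \<le> Re e"
    using Re assms(1) mult_right_mono[OF assms(1) abs_ge_zero[of "Im e"]] by linarith
  then show "\<sigma> / 2 \<le> Re e"
    using cmod_le[of e] lower by linarith
  show "\<bar>Im e\<bar> \<le> 2 * \<sigma>"
    using abs_Im_le_cmod[of e] upper by linarith
  show "cmod e \<le> 2 * \<sigma>"
    by (fact upper)
qed

lemma Nsym_eq: "Nsym \<omega> \<beta> e q = \<i> * of_real (kdot (fst q) \<omega>)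
  - e * of_real ((kdot (fst q) \<omega>)\<^sup>2 + (\<beta> * (real_of_int (snd q))^4 - (real_of_int (snd q))\<^sup>2))"
  unfolding Nsym_def by (simp add: algebra_simps)

lemma cmod_symbol_ge:
  fixes a c :: real
  assumes "Re e \<ge> 0"
  shows "Re e * \<bar>c\<bar> \<le> cmod (\<i> * of_real a - e * of_real c)"
    and "\<bar>a\<bar> - \<bar>Im e\<bar> * \<bar>c\<bar> \<le> cmod (\<i> * of_real a - e * of_real c)"
proof -
  let ?N = "\<i> * complex_of_real a - e * complex_of_real c"
  have "\<bar>Re ?N\<bar> = Re e * \<bar>c\<bar>"
    using assms by (simp add: abs_mult)
  then show "Re e * \<bar>c\<bar> \<le> cmod ?N"
    using abs_Re_le_cmod[of ?N] by simp
  have "\<bar>a\<bar> - \<bar>Im e\<bar> * \<bar>c\<bar> \<le> \<bar>Im ?N\<bar>"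
    by (simp add: abs_mult[symmetric] abs_triangle_ineq2)
  then show "\<bar>a\<bar> - \<bar>Im e\<bar> * \<bar>c\<bar> \<le> cmod ?N"
    using abs_Im_le_cmod[of ?N] by linarith
qed

lemma symbol_lower_bound_large_c:
  fixes a c B J :: real
  assumes \<sigma>: "\<sigma> > 0" and \<gamma>: "\<gamma> > 0" and J: "J \<ge> 1" and B: "\<gamma> * J \<le> \<bar>B\<bar>"
    and c: "\<bar>B\<bar> / 2 \<le> \<bar>c\<bar>" and e: "\<sigma> / 2 \<le> Re e"
  shows "\<sigma> * \<gamma> / 8 * (1 + J) \<le> cmod (\<i> * of_real a - e * of_real c)"
proof -
  have "\<sigma> * \<gamma> / 8 * (1 + J) \<le> (\<sigma> / 2) * (\<gamma> * J / 2)"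
    using J \<sigma> \<gamma> by (simp add: field_simps)
  also have "\<dots> \<le> Re e * \<bar>c\<bar>"
    using e c B \<sigma> \<gamma> J by (intro mult_mono) auto
  also have "\<dots> \<le> cmod (\<i> * of_real a - e * of_real c)"
    by (rule cmod_symbol_ge(1)) (use e \<sigma> in linarith)
  finally show ?thesis .
qed

lemma symbol_lower_bound_small_c:
  fixes a B J :: real
  assumes \<beta>: "\<beta> > 0" and \<gamma>: "\<gamma> > 0" and J: "J \<ge> 1" and B: "B = J * (\<beta> * J - 1)" "\<gamma> * J \<le> \<bar>B\<bar>"
    and c: "\<bar>a\<^sup>2 + B\<bar> < \<bar>B\<bar> / 2"
    and \<sigma>: "\<sigma> \<le> \<beta> * sqrt (\<gamma> / 2) / 2" and e: "0 \<le> Re e" "\<bar>Im e\<bar> \<le> 2 * \<sigma>"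
  shows "J \<le> 1 / \<beta>" and "sqrt (\<gamma> / 2) / 2 \<le> cmod (\<i> * of_real a - e * of_real (a\<^sup>2 + B))"
proof -
  have "\<not> 0 \<le> B"
  proof
    assume "0 \<le> B"
    then show False
      using c zero_le_power2[of a] abs_ge_self[of "a\<^sup>2 + B"] abs_of_nonneg[of B] by linarith
  qed
  then have B_neg: "\<bar>B\<bar> = - B"
    by simp
  have "\<beta> * J < 1"
    using \<open>\<not> 0 \<le> B\<close> J mult_nonneg_nonneg[of J "\<beta> * J - 1"] unfolding B(1) by linarith
  then have J_lt: "J / 2 < 1 / (2 * \<beta>)"
    using \<beta> by (simp add: field_simps)
  then show "J \<le> 1 / \<beta>"
    using \<beta> by (simp add: field_simps)
  have "\<bar>B\<bar> = J * (1 - \<beta> * J)"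
    using B_neg by (simp add: B(1) algebra_simps)
  also have "\<dots> \<le> J * 1"
    using \<beta> J by (intro mult_left_mono) auto
  finally have B_le: "\<bar>B\<bar> \<le> J"
    by simp
  have "\<gamma> * 1 \<le> \<gamma> * J"
    using \<gamma> J by (intro mult_left_mono) auto
  then have "\<gamma> / 2 \<le> a\<^sup>2"
    using c B(2) B_neg abs_ge_minus_self[of "a\<^sup>2 + B"] by linarith
  then have a: "sqrt (\<gamma> / 2) \<le> \<bar>a\<bar>"
    using real_sqrt_le_mono by (metis real_sqrt_abs)
  have "\<bar>Im e\<bar> * \<bar>a\<^sup>2 + B\<bar> \<le> (2 * \<sigma>) * (1 / (2 * \<beta>))"
    using c B_le J_lt e(2) by (intro mult_mono) auto
  also have "\<dots> \<le> sqrt (\<gamma> / 2) / 2"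
    using \<sigma> \<beta> by (simp add: field_simps)
  finally show "sqrt (\<gamma> / 2) / 2 \<le> cmod (\<i> * of_real a - e * of_real (a\<^sup>2 + B))"
    using cmod_symbol_ge(2)[OF e(1), where a = a and c = "a\<^sup>2 + B"] a by linarith
qed

text \<open>Either the \<open>\<epsilon>\<close>-coefficient \<open>c\<close> is large and \<open>Re \<epsilon> > 0\<close> gives the bound, or it is
  small, which forces \<open>\<beta> j\<^sup>2 < 1\<close> and a time frequency \<open>|k \<cdot> \<omega>|\<close> of order one.\<close>
lemma symbol_lower_bound:
  fixes a :: real and j :: int
  assumes \<beta>: "\<beta> > 0" and \<gamma>: "\<gamma> > 0" "\<gamma> \<le> \<bar>\<beta> * (real_of_int j)\<^sup>2 - 1\<bar>" and j: "j \<noteq> 0"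
    and \<sigma>: "\<sigma> > 0" "\<sigma> \<le> \<beta> * sqrt (\<gamma> / 2) / 2" and e: "\<sigma> / 2 \<le> Re e" "\<bar>Im e\<bar> \<le> 2 * \<sigma>"
  shows "min (\<sigma> * \<gamma> / 8) (sqrt (\<gamma> / 2) / (2 * (1 + 1 / \<beta>))) * (1 + (real_of_int j)\<^sup>2)
    \<le> cmod (\<i> * of_real a - e * of_real (a\<^sup>2 + (\<beta> * (real_of_int j)^4 - (real_of_int j)\<^sup>2)))"
proof -
  define J where "J = (real_of_int j)\<^sup>2"
  define B where "B = J * (\<beta> * J - 1)"
  define N where "N = cmod (\<i> * of_real a - e * of_real (a\<^sup>2 + B))"
  define c0 where "c0 = min (\<sigma> * \<gamma> / 8) (sqrt (\<gamma> / 2) / (2 * (1 + 1 / \<beta>)))"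
  have N_eq: "cmod (\<i> * of_real a - e * of_real (a\<^sup>2 + (\<beta> * (real_of_int j)^4 - (real_of_int j)\<^sup>2))) = N"
    unfolding N_def B_def J_def by (simp add: algebra_simps power4_eq_xxxx power2_eq_square)
  have "1 \<le> \<bar>real_of_int j\<bar>"
    using j by linarith
  then have "1 * 1 \<le> \<bar>real_of_int j\<bar> * \<bar>real_of_int j\<bar>"
    by (intro mult_mono) auto
  then have J: "J \<ge> 1"
    by (simp add: J_def power2_eq_square)
  have B_ge: "\<gamma> * J \<le> \<bar>B\<bar>"
    using mult_left_mono[OF \<gamma>(2), of J] J by (simp add: B_def J_def abs_mult mult.commute)
  consider "\<bar>B\<bar> / 2 \<le> \<bar>a\<^sup>2 + B\<bar>" | "\<bar>a\<^sup>2 + B\<bar> < \<bar>B\<bar> / 2"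
    by linarith
  then have "c0 * (1 + J) \<le> N"
  proof cases
    case 1
    have "c0 * (1 + J) \<le> \<sigma> * \<gamma> / 8 * (1 + J)"
      unfolding c0_def using J by (intro mult_right_mono min.cobounded1) auto
    also have "\<dots> \<le> N"
      unfolding N_def using \<sigma>(1) \<gamma>(1) J B_ge 1 e(1) by (rule symbol_lower_bound_large_c)
    finally show ?thesis .
  next
    case 2
    note small_c = symbol_lower_bound_small_c[OF \<beta> \<gamma>(1) J B_def B_ge 2 \<sigma>(2) _ e(2)]
    have Re_e: "0 \<le> Re e"
      using e(1) \<sigma>(1) by linarith
    have "c0 * (1 + J) \<le> sqrt (\<gamma> / 2) / (2 * (1 + 1 / \<beta>)) * (1 + 1 / \<beta>)"
      unfolding c0_def using J small_c(1)[OF Re_e] \<beta> \<gamma>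
      by (intro mult_mono min.cobounded2 divide_nonneg_pos) (auto intro: add_pos_pos)
    also have "\<dots> = sqrt (\<gamma> / 2) / 2"
    proof -
      have "x / (2 * y) * y = x / 2" if "y > 0" for x y :: real
        using that by (simp add: field_simps)
      moreover have "1 + 1 / \<beta> > 0"
        using \<beta> by (simp add: add_pos_pos)
      ultimately show ?thesis
        by blast
    qed
    also have "\<dots> \<le> N"
      unfolding N_def by (rule small_c(2)[OF Re_e])
    finally show ?thesis .
  qed
  then show ?thesis
    unfolding c0_def N_eq J_def .
qed

lemma symbol_coeffs_le:
  fixes a c :: real
  assumes \<sigma>: "\<sigma> > 0" and e: "\<sigma> / 2 \<le> Re e" "\<bar>Im e\<bar> \<le> 2 * \<sigma>"
  shows "\<bar>c\<bar> \<le> 2 / \<sigma> * cmod (\<i> * of_real a - e * of_real c)"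
    and "\<bar>a\<bar> \<le> 5 * cmod (\<i> * of_real a - e * of_real c)"
proof -
  define R where "R = cmod (\<i> * of_real a - e * of_real c)"
  have Re_e: "Re e \<ge> 0"
    using e \<sigma> by linarith
  note R_ge = cmod_symbol_ge[OF Re_e, where a = a and c = c, folded R_def]
  have "\<sigma> / 2 * \<bar>c\<bar> \<le> Re e * \<bar>c\<bar>"
    using e(1) by (intro mult_right_mono) auto
  then have "\<sigma> / 2 * \<bar>c\<bar> \<le> R"
    using R_ge(1) by linarith
  then show c: "\<bar>c\<bar> \<le> 2 / \<sigma> * R"
    using \<sigma> by (simp add: field_simps)
  have "\<bar>Im e\<bar> * \<bar>c\<bar> \<le> (2 * \<sigma>) * (2 / \<sigma> * R)"
    using e(2) c by (intro mult_mono) auto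
  also have "\<dots> = 4 * R"
    using \<sigma> by simp
  finally show "\<bar>a\<bar> \<le> 5 * R"
    using R_ge(2) by linarith
qed

lemma symbol_quotient_bounds:
  fixes a c t c0 :: real and e :: complex
  defines "N \<equiv> \<i> * of_real a - e * of_real c"
  assumes \<sigma>: "\<sigma> > 0" and e: "\<sigma> / 2 \<le> Re e" "\<bar>Im e\<bar> \<le> 2 * \<sigma>" "cmod e \<le> 2 * \<sigma>"
    and c0: "c0 > 0" and t: "t > 0" and N: "c0 * t \<le> cmod N"
  shows "cmod (e / N) * t \<le> 2 * \<sigma> / c0"
    and "cmod (\<i> * of_real a / N\<^sup>2) * t \<le> 5 / c0"
proof -
  have R: "cmod N > 0"
    using N c0 t by (smt (verit) mult_pos_pos)
  have tR: "t / cmod N \<le> 1 / c0"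
    using N c0 R by (simp add: field_simps)
  have "cmod (e / N) * t = cmod e * (t / cmod N)"
    by (simp add: norm_divide)
  also have "\<dots> \<le> (2 * \<sigma>) * (1 / c0)"
    using e(3) tR t R \<sigma> by (intro mult_mono) auto
  finally show "cmod (e / N) * t \<le> 2 * \<sigma> / c0"
    by simp
  have "cmod (\<i> * of_real a / N\<^sup>2) * t = (\<bar>a\<bar> / cmod N) * (t / cmod N)"
    by (simp add: norm_divide norm_mult norm_power power2_eq_square)
  also have "\<dots> \<le> 5 * (1 / c0)"
    using symbol_coeffs_le(2)[OF \<sigma> e(1,2), where a = a and c = c] tR t R
    by (intro mult_mono) (auto simp: N_def field_simps)
  finally show "cmod (\<i> * of_real a / N\<^sup>2) * t \<le> 5 / c0"
    by simp
qed

lemma ratio_difference_quotient: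
  fixes x c e e' N N' :: complex
  assumes N: "N = x - e * c" and N': "N' = x - e' * c" and nonzero: "N \<noteq> 0" "N' \<noteq> 0"
    and e': "e' \<noteq> e"
  shows "(e' / N' - e / N) / (e' - e) - x / N\<^sup>2 = x * c * (e' - e) / (N' * N\<^sup>2)"
proof -
  have numerator: "e' * N - e * N' = x * (e' - e)"
    unfolding N N' by (simp add: algebra_simps)
  have difference: "e' / N' - e / N = (e' * N - e * N') / (N' * N)"
    using nonzero by (simp add: field_simps)
  have quotient: "(e' / N' - e / N) / (e' - e) = x / (N' * N)"
    unfolding difference numerator using e' nonzero by (simp add: field_simps)
  have "x / (N' * N) - x / N\<^sup>2 = x * (N - N') / (N' * N\<^sup>2)"
    using nonzero by (simp add: field_simps power2_eq_square)
  moreover have "N - N' = (e' - e) * c"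
    unfolding N N' by (simp add: algebra_simps)
  ultimately show ?thesis
    unfolding quotient by (simp add: algebra_simps)
qed

lemma symbol_quotient_remainder:
  fixes a c t c0 :: real and e e' :: complex
  defines "N \<equiv> \<i> * of_real a - e * of_real c" and "N' \<equiv> \<i> * of_real a - e' * of_real c"
  assumes \<sigma>: "\<sigma> > 0" and e: "\<sigma> / 2 \<le> Re e" "\<bar>Im e\<bar> \<le> 2 * \<sigma>"
    and c0: "c0 > 0" and t: "t > 0" and N: "c0 * t \<le> cmod N" and N': "c0 * t \<le> cmod N'"
    and e': "e' \<noteq> e"
  shows "cmod ((e' / N' - e / N) / (e' - e) - \<i> * of_real a / N\<^sup>2) * t \<le> cmod (e' - e) * (10 / (\<sigma> * c0))"
proof -
  have R: "cmod N > 0" and R': "cmod N' > 0"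
    using N N' c0 t by (smt (verit) mult_pos_pos)+
  have "(e' / N' - e / N) / (e' - e) - \<i> * of_real a / N\<^sup>2
      = \<i> * of_real a * of_real c * (e' - e) / (N' * N\<^sup>2)"
    using R R' e' by (intro ratio_difference_quotient) (auto simp: N_def N'_def)
  then have "cmod ((e' / N' - e / N) / (e' - e) - \<i> * of_real a / N\<^sup>2) * t
      = (\<bar>a\<bar> / cmod N) * (\<bar>c\<bar> / cmod N) * cmod (e' - e) * (t / cmod N')"
    by (simp add: norm_divide norm_mult norm_power power2_eq_square)
  also have "\<dots> \<le> 5 * (2 / \<sigma>) * cmod (e' - e) * (1 / c0)"
    using symbol_coeffs_le[OF \<sigma> e, where a = a and c = c] N' R R' t \<sigma> c0
    by (intro mult_mono) (auto simp: N_def field_simps)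
  also have "\<dots> = cmod (e' - e) * (10 / (\<sigma> * c0))"
    by simp
  finally show ?thesis .
qed

definition eps_Ninv :: "real ^ ('d::finite) \<Rightarrow> real \<Rightarrow> complex \<Rightarrow> 'd fidx \<Rightarrow> complex" where
  "eps_Ninv \<omega> \<beta> e q = e / Nsym \<omega> \<beta> e q"

text \<open>The \<open>\<epsilon>\<close>-derivative of \<^const>\<open>eps_Ninv\<close>: \<open>d/d\<epsilon> (\<epsilon> / (i a - \<epsilon> c)) = i a / (i a - \<epsilon> c)\<^sup>2\<close>.\<close>
definition eps_Ninv_deriv :: "real ^ ('d::finite) \<Rightarrow> real \<Rightarrow> complex \<Rightarrow> 'd fidx \<Rightarrow> complex" where
  "eps_Ninv_deriv \<omega> \<beta> e q = \<i> * of_real (kdot (fst q) \<omega>) / (Nsym \<omega> \<beta> e q)\<^sup>2"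

lemma eps_Ninv_smoothing_bounds:
  fixes \<omega> :: "real ^ 'd::finite"
  assumes \<beta>: "\<beta> > 0" and \<gamma>: "\<gamma> > 0" and gap: "\<forall>j::int. j \<noteq> 0 \<longrightarrow> \<gamma> \<le> \<bar>\<beta> * (real_of_int j)\<^sup>2 - 1\<bar>"
    and \<mu>: "\<mu> \<ge> 1" and \<sigma>: "\<sigma> > 0" "\<sigma> \<le> \<beta> * sqrt (\<gamma> / 2) / 2"
  defines "c0 \<equiv> min (\<sigma> * \<gamma> / 8) (sqrt (\<gamma> / 2) / (2 * (1 + 1 / \<beta>)))"
  assumes e: "e \<in> Omega \<sigma> \<mu>"
  shows "smoothing_bound (eps_Ninv \<omega> \<beta> e) (2 * \<sigma> / c0)"
    and "smoothing_bound (eps_Ninv_deriv \<omega> \<beta> e) (5 / c0)"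
    and "e' \<in> Omega \<sigma> \<mu> \<Longrightarrow> e' \<noteq> e \<Longrightarrow> smoothing_bound
      (\<lambda>q. (eps_Ninv \<omega> \<beta> e' q - eps_Ninv \<omega> \<beta> e q) / (e' - e) - eps_Ninv_deriv \<omega> \<beta> e q)
      (cmod (e' - e) * (10 / (\<sigma> * c0)))"
proof -
  have c0: "c0 > 0"
    unfolding c0_def using \<sigma> \<gamma> \<beta> by (auto intro!: divide_pos_pos add_pos_pos)
  have lower: "c0 * (1 + (real_of_int (snd q))\<^sup>2) \<le> cmod (Nsym \<omega> \<beta> e q)"
    if "e \<in> Omega \<sigma> \<mu>" and "snd q \<noteq> 0" for e q
    unfolding c0_def Nsym_eq
    using symbol_lower_bound[OF \<beta> \<gamma> gap[rule_format, OF that(2)] that(2) \<sigma> Omega_bounds(1,2)[OF \<mu> that(1)]] .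
  have t: "1 + (real_of_int j)\<^sup>2 > 0" for j :: int
    by (simp add: add_pos_nonneg)
  note bounds = symbol_quotient_bounds[OF \<sigma>(1) Omega_bounds[OF \<mu> e] c0 t lower[OF e, unfolded Nsym_eq]]
  show "smoothing_bound (eps_Ninv \<omega> \<beta> e) (2 * \<sigma> / c0)"
    using bounds(1) by (simp add: smoothing_bound_def eps_Ninv_def Nsym_eq)
  show "smoothing_bound (eps_Ninv_deriv \<omega> \<beta> e) (5 / c0)"
    using bounds(2) by (simp add: smoothing_bound_def eps_Ninv_deriv_def Nsym_eq)
  assume e': "e' \<in> Omega \<sigma> \<mu>" "e' \<noteq> e"
  show "smoothing_bound
      (\<lambda>q. (eps_Ninv \<omega> \<beta> e' q - eps_Ninv \<omega> \<beta> e q) / (e' - e) - eps_Ninv_deriv \<omega> \<beta> e q)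
      (cmod (e' - e) * (10 / (\<sigma> * c0)))"
    using symbol_quotient_remainder[OF \<sigma>(1) Omega_bounds(1,2)[OF \<mu> e] c0 t
        lower[OF e, unfolded Nsym_eq] lower[OF e'(1), unfolded Nsym_eq] e'(2)]
    by (simp add: smoothing_bound_def eps_Ninv_def eps_Ninv_deriv_def Nsym_eq)
qed

section \<open>The map \<open>T\<close>\<close>

lemma Tmap_eq: "Tmap \<omega> \<beta> f e V = (\<lambda>q. eps_Ninv \<omega> \<beta> e q * (Dxx (conv V V) q + f q))"
  by (simp add: fun_eq_iff Tmap_def Dxx_def eps_Ninv_def)

lemma Tmap_in_Hspace:
  assumes m: "m \<ge> real CARD('d) + 1" and \<rho>: "\<rho> \<ge> 0" and f: "f \<in> Hspace \<rho> m"
    and M: "smoothing_bound (eps_Ninv \<omega> \<beta> e) C" and C: "C \<ge> 0" and V: "V \<in> Hspace \<rho> (m::real)"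
  shows "Tmap \<omega> \<beta> f e (V :: 'd::finite coeffs) \<in> Hspace \<rho> m"
proof -
  have "Hsummable \<rho> m V"
    using V by (simp add: Hspace_iff)
  from Hspace_smoothing_multiplier(1)[OF M C Hsummable_conv(2)[OF m \<rho> this this] f]
  show ?thesis
    unfolding Tmap_eq .
qed

lemma Tmap_Hdiff_within:
  assumes m: "m \<ge> real CARD('d) + 1" and \<rho>: "\<rho> \<ge> 0" and f: "f \<in> Hspace \<rho> m"
    and U: "\<forall>e \<in> S. U e \<in> Hspace \<rho> m \<and> Hdiff_within \<rho> m (U :: complex \<Rightarrow> 'd::finite coeffs) e S"
    and e: "e \<in> S"
    and M: "smoothing_bound (eps_Ninv \<omega> \<beta> e) C1" and Md: "smoothing_bound (eps_Ninv_deriv \<omega> \<beta> e) C2"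
    and M_diff: "\<And>e'. e' \<in> S \<Longrightarrow> e' \<noteq> e \<Longrightarrow> smoothing_bound
      (\<lambda>q. (eps_Ninv \<omega> \<beta> e' q - eps_Ninv \<omega> \<beta> e q) / (e' - e) - eps_Ninv_deriv \<omega> \<beta> e q) (cmod (e' - e) * C3)"
    and C: "C1 \<ge> 0" "C2 \<ge> 0" "C3 \<ge> 0"
  shows "Hdiff_within \<rho> m (\<lambda>e'. Tmap \<omega> \<beta> f e' (U e')) e S"
proof -
  obtain Ud where "has_Hderiv_within \<rho> m U Ud e S"
    using U e unfolding Hdiff_within_iff by blast
  moreover have U_summable: "\<And>e'. e' \<in> S \<Longrightarrow> Hsummable \<rho> m (U e')"
    using U by (simp add: Hspace_iff)
  ultimately have "has_Hderiv_within \<rho> m (\<lambda>e. conv (U e) (U e))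
      (\<lambda>q. conv Ud (U e) q + conv (U e) Ud q) e S"
    using e by (intro has_Hderiv_within_conv m \<rho>)
  then show ?thesis
    unfolding Tmap_eq using U_summable
    by (intro Hdiff_within_smoothing_multiplier[where M = "eps_Ninv \<omega> \<beta>", OF f _ _ e M Md M_diff C]
        Hsummable_conv m \<rho>)
qed

lemma Tmap_in_HOmega:
  assumes m: "m \<ge> real CARD('d) + 1" and \<rho>: "\<rho> \<ge> 0" and f: "f \<in> Hspace \<rho> m"
    and M: "\<And>e. e \<in> S \<Longrightarrow> smoothing_bound (eps_Ninv \<omega> \<beta> e) C" and C: "C \<ge> 0"
    and U: "U \<in> HOmega \<rho> m S"
    and T_diff: "\<And>e. e \<in> S \<Longrightarrow> Hdiff_within \<rho> m (\<lambda>e'. Tmap \<omega> \<beta> f e' (U e')) e S"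
  shows "(\<lambda>e. Tmap \<omega> \<beta> f e (U e :: 'd::finite coeffs)) \<in> HOmega \<rho> m S"
proof -
  obtain K where K: "K \<ge> 0"
    and conv_le: "\<And>A B :: 'd coeffs. Hsummable \<rho> m A \<Longrightarrow> Hsummable \<rho> m B
      \<Longrightarrow> Hnorm \<rho> m (conv A B) \<le> K * Hnorm \<rho> m A * Hnorm \<rho> m B"
    using Hnorm_conv_bound[OF m \<rho>] by blast
  obtain B where B: "\<And>e. e \<in> S \<Longrightarrow> Hnorm \<rho> m (U e) \<le> B" and U_H: "\<And>e. e \<in> S \<Longrightarrow> U e \<in> Hspace \<rho> m"
    using U unfolding HOmega_def by blast
  have "Hnorm \<rho> m (Tmap \<omega> \<beta> f e (U e)) \<le> C * (K * B * B + Hnorm \<rho> m f)" if e: "e \<in> S" for e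
  proof -
    have U_summable: "Hsummable \<rho> m (U e)"
      using U_H[OF e] by (simp add: Hspace_iff)
    have "Hnorm \<rho> m (Tmap \<omega> \<beta> f e (U e)) \<le> C * (Hnorm \<rho> m (conv (U e) (U e)) + Hnorm \<rho> m f)"
      unfolding Tmap_eq
      by (rule Hspace_smoothing_multiplier(2)[OF M[OF e] C Hsummable_conv(2)[OF m \<rho> U_summable U_summable] f])
    also have "\<dots> \<le> C * (K * B * B + Hnorm \<rho> m f)"
    proof -
      have "K * Hnorm \<rho> m (U e) * Hnorm \<rho> m (U e) \<le> K * B * B"
        using B[OF e] K Hnorm_nonneg[of \<rho> m "U e"] by (intro mult_mono) auto
      then show ?thesis
        using conv_le[OF U_summable U_summable] C by (intro mult_left_mono) auto
    qed
    finally show ?thesis .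
  qed
  then show ?thesis
    unfolding HOmega_def using Tmap_in_Hspace[OF m \<rho> f M C U_H] T_diff by blast
qed

lemma Tmap_on_Omega:
  fixes \<omega> :: "real ^ 'd::finite" and f :: "'d coeffs"
  assumes m: "m \<ge> real CARD('d) + 1" and \<rho>: "\<rho> \<ge> 0" and f: "f \<in> Hspace \<rho> m"
    and \<beta>: "\<beta> > 0" and \<gamma>: "\<gamma> > 0" and gap: "\<forall>j::int. j \<noteq> 0 \<longrightarrow> \<gamma> \<le> \<bar>\<beta> * (real_of_int j)\<^sup>2 - 1\<bar>"
    and \<mu>: "\<mu> \<ge> 1" and \<sigma>: "0 < \<sigma>" "\<sigma> \<le> \<beta> * sqrt (\<gamma> / 2) / 2"
  shows "\<forall>U \<in> HOmega \<rho> m (Omega \<sigma> \<mu>). (\<lambda>e. Tmap \<omega> \<beta> f e (U e)) \<in> HOmega \<rho> m (Omega \<sigma> \<mu>)"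
    and "\<forall>U. (\<forall>e \<in> Omega \<sigma> \<mu>. U e \<in> Hspace \<rho> m \<and> Hdiff_within \<rho> m U e (Omega \<sigma> \<mu>)) \<longrightarrow>
      (\<forall>e \<in> Omega \<sigma> \<mu>. Tmap \<omega> \<beta> f e (U e) \<in> Hspace \<rho> m \<and>
        Hdiff_within \<rho> m (\<lambda>e'. Tmap \<omega> \<beta> f e' (U e')) e (Omega \<sigma> \<mu>))"
proof -
  define c0 where "c0 = min (\<sigma> * \<gamma> / 8) (sqrt (\<gamma> / 2) / (2 * (1 + 1 / \<beta>)))"
  have C: "2 * \<sigma> / c0 \<ge> 0" "5 / c0 \<ge> 0" "10 / (\<sigma> * c0) \<ge> 0"
    unfolding c0_def using \<sigma> \<gamma> \<beta> by (auto intro!: divide_pos_pos add_pos_pos less_imp_le)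
  note bounds = eps_Ninv_smoothing_bounds[OF \<beta> \<gamma> gap \<mu> \<sigma>, where \<omega> = \<omega>, folded c0_def]
  have diff: "Tmap \<omega> \<beta> f e (U e) \<in> Hspace \<rho> m
      \<and> Hdiff_within \<rho> m (\<lambda>e'. Tmap \<omega> \<beta> f e' (U e')) e (Omega \<sigma> \<mu>)"
    if U: "\<forall>e \<in> Omega \<sigma> \<mu>. U e \<in> Hspace \<rho> m \<and> Hdiff_within \<rho> m U e (Omega \<sigma> \<mu>)"
      and e: "e \<in> Omega \<sigma> \<mu>" for U e
    using Tmap_in_Hspace[OF m \<rho> f bounds(1)[OF e] C(1)] U e
      Tmap_Hdiff_within[OF m \<rho> f U e bounds(1,2)[OF e] bounds(3)[OF e] C] by simp
  then show "\<forall>U. (\<forall>e \<in> Omega \<sigma> \<mu>. U e \<in> Hspace \<rho> m \<and> Hdiff_within \<rho> m U e (Omega \<sigma> \<mu>)) \<longrightarrow>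
      (\<forall>e \<in> Omega \<sigma> \<mu>. Tmap \<omega> \<beta> f e (U e) \<in> Hspace \<rho> m \<and>
        Hdiff_within \<rho> m (\<lambda>e'. Tmap \<omega> \<beta> f e' (U e')) e (Omega \<sigma> \<mu>))"
    by blast
  show "\<forall>U \<in> HOmega \<rho> m (Omega \<sigma> \<mu>). (\<lambda>e. Tmap \<omega> \<beta> f e (U e)) \<in> HOmega \<rho> m (Omega \<sigma> \<mu>)"
  proof
    fix U :: "complex \<Rightarrow> 'd coeffs" assume U: "U \<in> HOmega \<rho> m (Omega \<sigma> \<mu>)"
    show "(\<lambda>e. Tmap \<omega> \<beta> f e (U e)) \<in> HOmega \<rho> m (Omega \<sigma> \<mu>)"
    proof (rule Tmap_in_HOmega[OF m \<rho> f bounds(1) C(1) U])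
      show "Hdiff_within \<rho> m (\<lambda>e'. Tmap \<omega> \<beta> f e' (U e')) e (Omega \<sigma> \<mu>)"
        if "e \<in> Omega \<sigma> \<mu>" for e
        using diff[OF _ that] U unfolding HOmega_def by blast
    qed
  qed
qed

theorem proposition7p5:
  fixes \<omega> :: "real ^ 'd" and \<rho> m \<beta> :: real and f :: "'d coeffs"
  assumes "\<rho> > 0" and "m > real CARD('d) + 5" and "\<beta> > 0"
    and "\<forall>n::int. 1 / sqrt \<beta> \<noteq> of_int n"
    and "f \<in> Hspace \<rho> m"
  shows "\<exists>\<mu>0 \<sigma>0. \<sigma>0 > 0 \<and> (\<forall>\<mu> \<ge> \<mu>0. \<forall>\<sigma>. 0 < \<sigma> \<and> \<sigma> \<le> \<sigma>0 \<longrightarrow>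
           (\<forall>U \<in> HOmega \<rho> m (Omega \<sigma> \<mu>).
              (\<lambda>e. Tmap \<omega> \<beta> f e (U e)) \<in> HOmega \<rho> m (Omega \<sigma> \<mu>)) \<and>
           (\<forall>U. (\<forall>e \<in> Omega \<sigma> \<mu>. U e \<in> Hspace \<rho> m \<and> Hdiff_within \<rho> m U e (Omega \<sigma> \<mu>)) \<longrightarrow>
              (\<forall>e \<in> Omega \<sigma> \<mu>. Tmap \<omega> \<beta> f e (U e) \<in> Hspace \<rho> m \<and>
                 Hdiff_within \<rho> m (\<lambda>e'. Tmap \<omega> \<beta> f e' (U e')) e (Omega \<sigma> \<mu>))))"
proof -
  have \<rho>: "\<rho> \<ge> 0" and m: "m \<ge> real CARD('d) + 1"
    using assms(1,2) by simp_all
  obtain \<gamma> where \<gamma>: "\<gamma> > 0" and gap: "\<forall>j::int. j \<noteq> 0 \<longrightarrow> \<gamma> \<le> \<bar>\<beta> * (real_of_int j)\<^sup>2 - 1\<bar>"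
    using small_divisor_gap[OF assms(3,4)] by blast
  show ?thesis
  proof (rule exI[of _ 1], rule exI[of _ "\<beta> * sqrt (\<gamma> / 2) / 2"], intro conjI allI impI)
    show "\<beta> * sqrt (\<gamma> / 2) / 2 > 0"
      using assms(3) \<gamma> by simp
    fix \<mu> \<sigma> :: real
    assume \<mu>: "1 \<le> \<mu>" and \<sigma>: "0 < \<sigma> \<and> \<sigma> \<le> \<beta> * sqrt (\<gamma> / 2) / 2"
    note on_Omega = Tmap_on_Omega[OF m \<rho> assms(5,3) \<gamma> gap \<mu> conjunct1[OF \<sigma>] conjunct2[OF \<sigma>],
        where \<omega> = \<omega>]
    show "\<forall>U \<in> HOmega \<rho> m (Omega \<sigma> \<mu>). (\<lambda>e. Tmap \<omega> \<beta> f e (U e)) \<in> HOmega \<rho> m (Omega \<sigma> \<mu>)"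
      by (fact on_Omega(1))
    show "\<forall>e \<in> Omega \<sigma> \<mu>. Tmap \<omega> \<beta> f e (U e) \<in> Hspace \<rho> m \<and>
        Hdiff_within \<rho> m (\<lambda>e'. Tmap \<omega> \<beta> f e' (U e')) e (Omega \<sigma> \<mu>)"
      if "\<forall>e \<in> Omega \<sigma> \<mu>. U e \<in> Hspace \<rho> m \<and> Hdiff_within \<rho> m U e (Omega \<sigma> \<mu>)" for U
      using on_Omega(2) that by blast
  qed
qed

end
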